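(* Fix a constant $c\ge1$. There is a constant $C>0$ depending only on $c$ such that the following holds for all integers $n\ge3$, $U\ge3$ with $n/c\le U\le cn$. Let $z(0)$ be a row vector indexed by the $2n$ states with nonnegative entries summing to $F>0$, and let $z(t)=z(0)K^t$. Then for every $\epsilon'\in(0,1/2]$ and every $t\ge C\,n\log(n/\epsilon')$, $$|z_x(t)-\pi_xF|\le\frac{\epsilon'}{2n}F\quad\text{for every state }x.$$
   Context: Let $n\ge3$ and $U\ge3$ be integers. The "original chain" is the Markov chain on the $2n$ states $\{1,\dots,n,1',\dots,n'\}$ with the following transition probabilities (all unlisted transitions have probability $0$): for $2\le i\le n-1$: $i\to i$ w.p. $1/2$, $i\to i+1$ w.p. $\frac12(1-\frac1U)$, $i\to(i+1)'$ w.p. $\frac1{2U}$; for $2\le i\le n-1$: $i'\to i'$ w.p. $1/2$, $i'\to(i-1)'$ w.p. $\frac12(1-\frac1U)$, $i'\to i-1$ w.p. $\frac1{2U}$; $1\to2$ w.p. $1-\frac1U$, $1\to2'$ w.p. $\frac1U$; $1'\to1$ w.p. $1-\frac1U$, $1'\to1'$ w.p. $\frac1U$; $n\to n'$ w.p. $1-\frac1U$, $n\to n$ w.p. $\frac1U$; $n'\to(n-1)'$ w.p. $1-\frac1U$, $n'\to n-1$ w.p. $\frac1U$. $K$ is its $2n\times 2n$ row-stochastic transition matrix ($K_{xy}$ = probability of moving from $x$ to $y$), and $\pi$ its unique stationary distribution ($\pi K=\pi$). *)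

theory Defs
  imports Complex_Main
begin

text \<open>States: (i, False) is the unprimed state i, (i, True) is the primed state i', for 1 <= i <= n.\<close>

definition states :: "nat \<Rightarrow> (nat \<times> bool) set" where
  "states n = {1..n} \<times> UNIV"

definition Kmat :: "nat \<Rightarrow> nat \<Rightarrow> (nat \<times> bool) \<Rightarrow> (nat \<times> bool) \<Rightarrow> real" where
  "Kmat n U x y = (let p = 1 / real U; i = fst x in
     if x \<notin> states n then 0
     else if \<not> snd x then
       (if i = 1 then
          (if y = (2, False) then 1 - p else if y = (2, True) then p else 0)
        else if i = n then
          (if y = (n, True) then 1 - p else if y = (n, False) then p else 0)
        else
          (if y = (i, False) then 1/2
           else if y = (i + 1, False) then (1 - p) / 2
           else if y = (i + 1, True) then p / 2 else 0))
     else
       (if i = 1 then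
          (if y = (1, False) then 1 - p else if y = (1, True) then p else 0)
        else if i = n then
          (if y = (n - 1, True) then 1 - p else if y = (n - 1, False) then p else 0)
        else
          (if y = (i, True) then 1/2
           else if y = (i - 1, True) then (1 - p) / 2
           else if y = (i - 1, False) then p / 2 else 0)))"

fun evolve :: "nat \<Rightarrow> nat \<Rightarrow> ((nat \<times> bool) \<Rightarrow> real) \<Rightarrow> nat \<Rightarrow> (nat \<times> bool) \<Rightarrow> real" where
  "evolve n U z 0 = z"
| "evolve n U z (Suc t) = (\<lambda>y. \<Sum>x\<in>states n. evolve n U z t x * Kmat n U x y)"

definition is_stationary :: "nat \<Rightarrow> nat \<Rightarrow> ((nat \<times> bool) \<Rightarrow> real) \<Rightarrow> bool" where
  "is_stationary n U p \<longleftrightarrow>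
     (\<forall>x\<in>states n. p x \<ge> 0) \<and> (\<forall>x. x \<notin> states n \<longrightarrow> p x = 0) \<and>
     (\<Sum>x\<in>states n. p x) = 1 \<and>
     (\<forall>y\<in>states n. (\<Sum>x\<in>states n. p x * Kmat n U x y) = p y)"

definition stat_dist :: "nat \<Rightarrow> nat \<Rightarrow> (nat \<times> bool) \<Rightarrow> real" where
  "stat_dist n U = (THE p. is_stationary n U p)"

end

theory Submission
  imports Defs
begin

(* The chain walks forward on the unprimed lane 1..n and backward on the primed lane, switching
   lane with probability p = 1/U per move and turning at both ends.  The proof is a Doeblin
   (minorisation) argument:

   1. For any finite stochastic kernel, a minorisation P^T(x,.) >= delta nu(.) for all x shrinks
      the l1-distance between a mass vector and its stationary multiple by (1 - delta) every T
      steps; this yields uniqueness of the stationary law and geometric convergence.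
   2. The chain has an explicit stationary law (uniform, with half weight at positions 1 and n),
      which is therefore the distribution named stat_dist.
   3. Lower bounds on t-step probabilities come from explicit sub-solutions of the forward
      equation, whose number of moves is Binomial(t,1/2); Chebyshev's inequality for this law
      locates the walker up to O(sqrt t).  A reflection of the state space exchanges the lanes.
   4. For n >= 5120 these bounds show that within T = 153 q steps (q = n div 40) every state puts
      mass at least delta(c) / (2q+1) on each state of a fixed block of 2q+1 forward states, with
      delta(c) > 0 depending on c only; for smaller n the path to state 2 of length 2n+2 has
      probability at least 3^-(2n+2).
   5. An elementary estimate turns the rate (1 - delta)^(t div T) into t >= C n log(n/eps). *)


subsection \<open>The Binomial(t, 1/2) law\<close>

text \<open>binom_half t M is the probability that a lazy walk, moving with probability 1/2 per step,
  has made M moves after t steps.  Its second moment gives Chebyshev windows around t/2.\<close>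

fun binom_half :: "nat \<Rightarrow> nat \<Rightarrow> real" where
  "binom_half 0 M = (if M = 0 then 1 else 0)"
| "binom_half (Suc t) M = (binom_half t M + (if M = 0 then 0 else binom_half t (M - 1))) / 2"

lemma binom_half_nonneg: "binom_half t M \<ge> 0"
  by (induction t arbitrary: M) auto

lemma binom_half_beyond: "M > t \<Longrightarrow> binom_half t M = 0"
  by (induction t arbitrary: M) auto

lemma binom_half_Suc_Suc: "binom_half (Suc t) (Suc M) = (binom_half t (Suc M) + binom_half t M) / 2"
  by simp

lemma binom_half_expect_Suc:
  "(\<Sum>M\<le>Suc t. binom_half (Suc t) M * f M) = (\<Sum>M\<le>t. binom_half t M * (f M + f (Suc M))) / 2"
proof -
  have "(\<Sum>M\<le>Suc t. binom_half (Suc t) M * f M) =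
        (\<Sum>M\<le>Suc t. (binom_half t M * f M) / 2 + ((if M = 0 then 0 else binom_half t (M - 1)) * f M) / 2)"
    by (intro sum.cong) (auto simp: field_simps)
  also have "\<dots> = (\<Sum>M\<le>Suc t. binom_half t M * f M) / 2
                  + (\<Sum>M\<le>Suc t. (if M = 0 then 0 else binom_half t (M - 1)) * f M) / 2"
    by (simp only: sum.distrib sum_divide_distrib)
  also have "(\<Sum>M\<le>Suc t. binom_half t M * f M) = (\<Sum>M\<le>t. binom_half t M * f M)"
    by (simp add: binom_half_beyond)
  also have "(\<Sum>M\<le>Suc t. (if M = 0 then 0 else binom_half t (M - 1)) * f M) = (\<Sum>M\<le>t. binom_half t M * f (Suc M))"
    by (subst sum.atMost_Suc_shift) simp
  finally show ?thesis by (simp add: sum.distrib[symmetric] field_simps sum_divide_distrib)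
qed

lemma binom_half_total: "(\<Sum>M\<le>t. binom_half t M) = 1"
proof (induction t)
  case (Suc t)
  have "(\<Sum>M\<le>Suc t. binom_half (Suc t) M) = (\<Sum>M\<le>Suc t. binom_half (Suc t) M * 1)" by simp
  also have "\<dots> = (\<Sum>M\<le>t. binom_half t M * (1 + 1)) / 2" by (rule binom_half_expect_Suc)
  also have "\<dots> = 1" using Suc by (simp add: sum_distrib_right[symmetric])
  finally show ?case .
qed simp

lemma binom_half_mean: "(\<Sum>M\<le>t. binom_half t M * real M) = real t / 2"
proof (induction t)
  case (Suc t)
  have "(\<Sum>M\<le>Suc t. binom_half (Suc t) M * real M) = (\<Sum>M\<le>t. binom_half t M * (real M + real (Suc M))) / 2"
    by (rule binom_half_expect_Suc)
  also have "(\<Sum>M\<le>t. binom_half t M * (real M + real (Suc M))) =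
             2 * (\<Sum>M\<le>t. binom_half t M * real M) + (\<Sum>M\<le>t. binom_half t M)"
    by (simp add: algebra_simps sum.distrib sum_distrib_left)
  finally show ?case using Suc binom_half_total[of t] by simp
qed simp

lemma binom_half_second_moment: "(\<Sum>M\<le>t. binom_half t M * real M ^ 2) = real t * (real t + 1) / 4"
proof (induction t)
  case (Suc t)
  have "(\<Sum>M\<le>Suc t. binom_half (Suc t) M * real M ^ 2) =
        (\<Sum>M\<le>t. binom_half t M * (real M ^ 2 + real (Suc M) ^ 2)) / 2"
    by (rule binom_half_expect_Suc)
  also have "(\<Sum>M\<le>t. binom_half t M * (real M ^ 2 + real (Suc M) ^ 2)) =
      2 * (\<Sum>M\<le>t. binom_half t M * real M ^ 2) + 2 * (\<Sum>M\<le>t. binom_half t M * real M) + (\<Sum>M\<le>t. binom_half t M)"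
    by (simp add: algebra_simps power2_eq_square sum.distrib sum_distrib_left)
  finally show ?case using Suc binom_half_total[of t] binom_half_mean[of t] by (simp add: field_simps)
qed simp

lemma binom_half_variance: "(\<Sum>M\<le>t. binom_half t M * (real M - real t / 2) ^ 2) = real t / 4"
proof -
  have "(\<Sum>M\<le>t. binom_half t M * (real M - real t / 2) ^ 2) =
     (\<Sum>M\<le>t. binom_half t M * real M ^ 2 - real t * (binom_half t M * real M) + (real t)^2/4 * binom_half t M)"
    by (intro sum.cong) (auto simp: algebra_simps power2_eq_square)
  also have "\<dots> = (\<Sum>M\<le>t. binom_half t M * real M ^ 2) - real t * (\<Sum>M\<le>t. binom_half t M * real M)
                  + (real t)^2/4 * (\<Sum>M\<le>t. binom_half t M)"
    by (simp only: sum.distrib sum_subtractf sum_distrib_left)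
  finally show ?thesis
    unfolding binom_half_total binom_half_mean binom_half_second_moment by (simp add: field_simps power2_eq_square)
qed

lemma binom_half_parity: "(\<Sum>M\<le>Suc t. binom_half (Suc t) M * (if even M = b then 1 else 0)) = 1/2"
proof -
  have "(\<Sum>M\<le>Suc t. binom_half (Suc t) M * (if even M = b then 1 else 0)) =
     (\<Sum>M\<le>t. binom_half t M * ((if even M = b then 1 else 0) + (if even (Suc M) = b then 1 else 0))) / 2"
    by (rule binom_half_expect_Suc)
  also have "(\<Sum>M\<le>t. binom_half t M * ((if even M = b then 1 else 0) + (if even (Suc M) = b then 1 else 0)))
             = (\<Sum>M\<le>t. binom_half t M)"
    by (intro sum.cong) auto
  finally show ?thesis using binom_half_total[of t] by simp
qed

lemma binom_half_tail:
  assumes "w > 0"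
  shows "(\<Sum>M\<le>t. binom_half t M * (if \<bar>real M - real t / 2\<bar> \<ge> w then 1 else 0)) \<le> real t / (4 * w^2)"
proof -
  have "(\<Sum>M\<le>t. binom_half t M * (if \<bar>real M - real t / 2\<bar> \<ge> w then 1 else 0))
      \<le> (\<Sum>M\<le>t. binom_half t M * ((real M - real t / 2) ^ 2 / w^2))"
  proof (intro sum_mono mult_left_mono)
    fix M
    show "(if \<bar>real M - real t / 2\<bar> \<ge> w then 1 else 0) \<le> (real M - real t / 2) ^ 2 / w^2"
    proof (cases "\<bar>real M - real t / 2\<bar> \<ge> w")
      case True
      then have "w^2 \<le> (real M - real t / 2) ^ 2" using assms
        by (metis abs_le_square_iff abs_of_pos)
      then show ?thesis using True assms by simp
    qed simp
  qed (rule binom_half_nonneg)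
  also have "\<dots> = (\<Sum>M\<le>t. binom_half t M * (real M - real t / 2) ^ 2) / w^2"
    by (simp add: sum_divide_distrib)
  also have "\<dots> = real t / (4 * w^2)" by (simp add: binom_half_variance)
  finally show ?thesis .
qed

lemma binom_half_window:
  assumes "w > 0" "real L \<le> real t / 2 - w" "real H \<ge> real t / 2 + w"
  shows "(\<Sum>M\<in>{L..H}. binom_half t M) \<ge> 1 - real t / (4 * w^2)"
proof -
  have "(\<Sum>M\<le>t. binom_half t M) \<le> (\<Sum>M\<le>t. binom_half t M * (if M \<in> {L..H} then 1 else 0))
          + (\<Sum>M\<le>t. binom_half t M * (if \<bar>real M - real t / 2\<bar> \<ge> w then 1 else 0))"
    unfolding sum.distrib[symmetric] using assms binom_half_nonneg by (intro sum_mono) auto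
  also have "(\<Sum>M\<le>t. binom_half t M * (if M \<in> {L..H} then 1 else 0)) = (\<Sum>M\<in>{M\<in>{..t}. M \<in> {L..H}}. binom_half t M)"
    by (rule sum.mono_neutral_cong_right) auto
  also have "\<dots> \<le> (\<Sum>M\<in>{L..H}. binom_half t M)"
    by (rule sum_mono2) (auto intro: binom_half_nonneg)
  finally show ?thesis using binom_half_total[of t] binom_half_tail[OF assms(1), of t] by linarith
qed

lemma binom_half_window_parity:
  assumes "w > 0" "t \<ge> 1" "real (2*a + c) \<le> real t / 2 - w" "real (2*b + c) \<ge> real t / 2 + w"
  shows "(\<Sum>u\<in>{a..b}. binom_half t (2*u + c)) \<ge> 1/2 - real t / (4 * w^2)"
proof -
  obtain t' where t': "t = Suc t'" using assms(2) by (cases t) auto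
  let ?I = "\<lambda>M. if even M = even c then 1 else (0::real)"
  let ?J = "\<lambda>M. if \<bar>real M - real t / 2\<bar> \<ge> w then 1 else (0::real)"
  let ?A = "{M\<in>{..t}. even M = even c \<and> 2*a + c \<le> M \<and> M \<le> 2*b + c}"
  have "1/2 = (\<Sum>M\<le>t. binom_half t M * ?I M)" using binom_half_parity[of t' "even c"] t' by simp
  also have "\<dots> \<le> (\<Sum>M\<le>t. binom_half t M * (if M \<in> ?A then 1 else 0)) + (\<Sum>M\<le>t. binom_half t M * ?J M)"
    unfolding sum.distrib[symmetric] using assms binom_half_nonneg by (intro sum_mono) auto
  also have "(\<Sum>M\<le>t. binom_half t M * (if M \<in> ?A then 1 else 0)) = (\<Sum>M\<in>?A. binom_half t M)"
    by (rule sum.mono_neutral_cong_right) auto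
  also have "\<dots> \<le> (\<Sum>M\<in>(\<lambda>u. 2*u + c) ` {a..b}. binom_half t M)"
  proof (rule sum_mono2)
    show "?A \<subseteq> (\<lambda>u. 2*u + c) ` {a..b}"
    proof
      fix M assume M: "M \<in> ?A"
      then have "even (M - c)" "c \<le> M" by auto
      then obtain u where u: "M - c = 2*u" unfolding dvd_def by blast
      then have "M = 2*u + c" "u \<in> {a..b}" using M by auto
      then show "M \<in> (\<lambda>u. 2*u + c) ` {a..b}" by blast
    qed
  qed (auto intro: binom_half_nonneg)
  also have "\<dots> = (\<Sum>u\<in>{a..b}. binom_half t (2*u + c))"
    by (subst sum.reindex) (auto simp: inj_on_def)
  finally show ?thesis using binom_half_tail[OF assms(1), of t] by linarith
qed


lemma exp_le_one_minus: fixes x :: real assumes "0 \<le> x" "x \<le> 1/2" shows "exp (-2*x) \<le> 1 - x"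
proof -
  have "exp (2*x) \<ge> 1 + 2*x" by (rule exp_ge_add_one_self)
  then have "exp (-2*x) \<le> 1 / (1 + 2*x)"
    using assms by (simp add: exp_minus field_simps)
  also have "\<dots> \<le> 1 - x"
  proof -
    have "x * (1 - 2*x) \<ge> 0" using assms by (intro mult_nonneg_nonneg) auto
    then have "1 \<le> (1 - x) * (1 + 2*x)" by (simp add: algebra_simps)
    then show ?thesis using assms by (simp add: divide_le_eq)
  qed
  finally show ?thesis .
qed

text \<open>The recursion of binom_half, rearranged to match the two predecessors of a state.\<close>

lemma half_sum_mult: "(a + b)/2 * (q * c) = a * (q * c) * (1/2) + b * c * (q / 2)" for a b c q :: real
  by (simp add: algebra_simps)

lemma half_split_pow: "(a + b)/2 * q^(m+3) = a * q^(m+3) * (1/2) + b * q^(m+2) * (q / 2)" for a b q :: real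
proof -
  have "q^(m+3) = q^(m+2) * q" by (simp add: power_add power2_eq_square power3_eq_cube)
  then show ?thesis by (simp add: field_simps)
qed

lemma sum_prod_ge_uniform:
  fixes f g :: "nat \<Rightarrow> real"
  assumes "\<And>j. j \<in> {j1..j2} \<Longrightarrow> f j \<ge> s1" "\<And>j. j \<in> {j1..j2} \<Longrightarrow> g j \<ge> s2" "s1 \<ge> 0" "s2 \<ge> 0"
  shows "(\<Sum>j\<in>{j1..j2}. f j * g j) \<ge> real (j2 + 1 - j1) * (s1 * s2)"
proof -
  have "(\<Sum>j\<in>{j1..j2}. s1 * s2) \<le> (\<Sum>j\<in>{j1..j2}. f j * g j)"
    using assms by (intro sum_mono mult_mono) (auto intro: order.trans[OF assms(3)])
  then show ?thesis by simp
qed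

lemma sum_prod_ge_mass:
  fixes f g :: "'b \<Rightarrow> real"
  assumes "(\<Sum>j\<in>A. f j) \<ge> m" "\<And>j. j \<in> A \<Longrightarrow> g j \<ge> s" "s \<ge> 0" "\<And>j. f j \<ge> 0"
  shows "(\<Sum>j\<in>A. f j * g j) \<ge> m * s"
proof -
  have "m * s \<le> (\<Sum>j\<in>A. f j) * s" using assms(1,3) by (rule mult_right_mono)
  also have "\<dots> = (\<Sum>j\<in>A. f j * s)" by (simp add: sum_distrib_right)
  also have "\<dots> \<le> (\<Sum>j\<in>A. f j * g j)" using assms by (intro sum_mono mult_left_mono) auto
  finally show ?thesis .
qed

lemma real_div_ge: fixes t T :: nat assumes "T \<ge> 1" shows "real (t div T) \<ge> real t / real T - 1"
proof -
  have "t < (t div T + 1) * T" using assms by (simp add: dividend_less_div_times)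
  then have "real t < (real (t div T) + 1) * real T" by (metis of_nat_1 of_nat_add of_nat_less_iff of_nat_mult)
  then show ?thesis using assms by (simp add: field_simps)
qed

lemma one_minus_pow_le_exp:
  fixes \<delta> :: real assumes "\<delta> \<le> 1" shows "(1 - \<delta>) ^ k \<le> exp (- (\<delta> * real k))"
proof -
  have "(1 - \<delta>) ^ k \<le> exp (- \<delta>) ^ k"
    using assms by (intro power_mono) (auto simp: exp_ge_add_one_self[of "-\<delta>", simplified])
  also have "\<dots> = exp (- (\<delta> * real k))" by (simp add: exp_of_nat_mult[symmetric] mult.commute)
  finally show ?thesis .
qed

lemma ln_ratio_ge:
  fixes eps :: real assumes "n \<ge> 3" "0 < eps" "eps \<le> 1/2"
  shows "1 \<le> ln (real n / eps)" "ln 4 \<le> ln (real n / eps)"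
proof -
  have "real n / eps \<ge> 3 / (1/2)" using assms by (intro frac_le) auto
  then have ne6: "real n / eps \<ge> 6" by simp
  then have "exp 1 \<le> real n / eps" using exp_le by linarith
  then have "ln (exp 1) \<le> ln (real n / eps)" using assms by (subst ln_le_cancel_iff) auto
  then show "1 \<le> ln (real n / eps)" by simp
  show "ln 4 \<le> ln (real n / eps)" using ne6 by (subst ln_le_cancel_iff) auto
qed

lemma contraction_time:
  fixes \<delta> \<delta>0 A eps :: real and n T t :: nat
  assumes T: "T \<ge> 1" and TA: "real T \<le> A * real n" and d0: "0 < \<delta>0" "\<delta>0 \<le> \<delta>" and d1: "\<delta> \<le> 1"
    and n3: "n \<ge> 3" and eps: "0 < eps" "eps \<le> 1/2"
    and t: "real t \<ge> (A * (2 / \<delta>0 + 1)) * real n * ln (real n / eps)"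
  shows "(1 - \<delta>) ^ (t div T) \<le> eps / (4 * real n)"
proof -
  define k where "k = t div T"
  define L where "L = ln (real n / eps)"
  have L1: "L \<ge> 1" and L4: "ln 4 \<le> L" using ln_ratio_ge[OF n3 eps] by (simp_all add: L_def)
  have npos: "real n > 0" using n3 by simp
  have tT: "real T > 0" using T by simp
  have "A * real n > 0" using TA tT by linarith
  then have A0: "A > 0" using npos by (simp add: zero_less_mult_iff)
  have "(2 / \<delta>0 + 1) * L = (A * (2 / \<delta>0 + 1)) * real n * L / (A * real n)"
    using A0 npos by (simp add: field_simps)
  also have "\<dots> \<le> (A * (2 / \<delta>0 + 1)) * real n * L / real T"
    using TA tT A0 npos L1 d0 by (intro divide_left_mono) (auto intro!: mult_pos_pos add_pos_pos)
  also have "\<dots> \<le> real t / real T" using t tT by (intro divide_right_mono) (auto simp: L_def)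
  finally have kL: "real k \<ge> (2 / \<delta>0 + 1) * L - 1" using real_div_ge[OF T, of t] by (simp add: k_def)
  have "\<delta>0 * real k \<ge> \<delta>0 * ((2 / \<delta>0 + 1) * L - 1)" using kL d0 by (intro mult_left_mono) auto
  also have "\<delta>0 * ((2 / \<delta>0 + 1) * L - 1) = 2 * L + \<delta>0 * (L - 1)" using d0 by (simp add: field_simps)
  finally have "\<delta>0 * real k \<ge> 2 * L" using L1 d0 by (smt (verit) mult_nonneg_nonneg)
  then have dk: "\<delta> * real k \<ge> ln 4 + L" using L4 d0 by (smt (verit) mult_right_mono of_nat_0_le_iff)
  have "(1 - \<delta>) ^ k \<le> exp (- (\<delta> * real k))" by (rule one_minus_pow_le_exp[OF d1])
  also have "\<dots> \<le> exp (- (ln 4 + L))" using dk by simp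
  also have "\<dots> = eps / (4 * real n)"
  proof -
    have "exp (ln 4 + L) = 4 * (real n / eps)" unfolding L_def exp_add using npos eps by simp
    then show ?thesis unfolding exp_minus using npos eps by (simp add: field_simps)
  qed
  finally show ?thesis by (simp add: k_def)
qed


subsection \<open>Finite stochastic kernels and Doeblin's condition\<close>

locale stochastic_kernel =
  fixes S :: "'a set" and K :: "'a \<Rightarrow> 'a \<Rightarrow> real"
  assumes finite_S: "finite S"
    and K_nonneg: "K x y \<ge> 0"
    and K_row: "x \<in> S \<Longrightarrow> (\<Sum>y\<in>S. K x y) = 1"
begin

fun P :: "nat \<Rightarrow> 'a \<Rightarrow> 'a \<Rightarrow> real" where
  P_0: "P 0 x y = (if y = x then 1 else 0)"
| P_Suc: "P (Suc t) x y = (\<Sum>w\<in>S. P t x w * K w y)"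

declare P_Suc [simp del]

lemma P_nonneg: "P t x y \<ge> 0"
  by (induction t arbitrary: y) (simp_all add: P_Suc sum_nonneg K_nonneg)

lemma P_row: "x \<in> S \<Longrightarrow> (\<Sum>y\<in>S. P t x y) = 1"
proof (induction t)
  case (Suc t)
  have "(\<Sum>y\<in>S. P (Suc t) x y) = (\<Sum>w\<in>S. P t x w * (\<Sum>y\<in>S. K w y))"
    by (simp add: P_Suc sum_distrib_left) (rule sum.swap)
  also have "\<dots> = (\<Sum>w\<in>S. P t x w)" by (simp add: K_row)
  finally show ?case using Suc by simp
qed (simp add: finite_S)

lemma P_le_1: "x \<in> S \<Longrightarrow> y \<in> S \<Longrightarrow> P t x y \<le> 1"
  using P_row[of x t] member_le_sum[of y S "P t x"] P_nonneg finite_S by fastforce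

lemma P_1: assumes "x \<in> S" shows "P 1 x y = K x y"
proof -
  have "(\<Sum>w\<in>S. P 0 x w * K w y) = (\<Sum>w\<in>S. if w = x then K x y else 0)"
    by (intro sum.cong) auto
  then show ?thesis using assms finite_S by (simp add: P_Suc)
qed

lemma P_add: "y \<in> S \<Longrightarrow> P (a + b) x y = (\<Sum>w\<in>S. P a x w * P b w y)"
proof (induction b arbitrary: y)
  case 0
  have "(\<Sum>w\<in>S. P a x w * P 0 w y) = (\<Sum>w\<in>S. if w = y then P a x y else 0)"
    by (intro sum.cong) auto
  then show ?case using 0 finite_S by simp
next
  case (Suc b)
  have "P (a + Suc b) x y = (\<Sum>v\<in>S. (\<Sum>w\<in>S. P a x w * P b w v) * K v y)"
    using Suc by (simp add: P_Suc)
  also have "\<dots> = (\<Sum>w\<in>S. P a x w * P (Suc b) w y)"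
    by (simp add: P_Suc sum_distrib_left sum_distrib_right mult.assoc) (rule sum.swap)
  finally show ?case .
qed

lemma P_ge_sum: assumes "W \<subseteq> S" "y \<in> S" shows "P (a + b) x y \<ge> (\<Sum>w\<in>W. P a x w * P b w y)"
  unfolding P_add[OF assms(2)] by (rule sum_mono2) (use assms finite_S in \<open>auto intro: mult_nonneg_nonneg P_nonneg\<close>)

lemma P_ge_one: assumes "w \<in> S" "y \<in> S" shows "P (a + b) x y \<ge> P a x w * P b w y"
  using P_ge_sum[of "{w}" y] assms by simp

lemma P_Suc_ge: assumes "W \<subseteq> S" shows "P (Suc t) x y \<ge> (\<Sum>w\<in>W. P t x w * K w y)"
  unfolding P_Suc by (rule sum_mono2) (use assms finite_S in \<open>auto intro: mult_nonneg_nonneg P_nonneg K_nonneg\<close>)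

lemma lower_solution_le_P:
  assumes nn: "\<And>t y. LB t y \<ge> 0"
    and init: "\<And>y. y \<in> S \<Longrightarrow> LB 0 y \<le> (if y = x then 1 else 0)"
    and step: "\<And>t y. y \<in> S \<Longrightarrow> \<exists>W\<subseteq>S. LB (Suc t) y \<le> (\<Sum>w\<in>W. LB t w * K w y)"
  shows "y \<in> S \<Longrightarrow> LB t y \<le> P t x y"
proof (induction t arbitrary: y)
  case 0 then show ?case using init by simp
next
  case (Suc t)
  obtain W where W: "W \<subseteq> S" "LB (Suc t) y \<le> (\<Sum>w\<in>W. LB t w * K w y)" using step Suc.prems by blast
  have "(\<Sum>w\<in>W. LB t w * K w y) \<le> (\<Sum>w\<in>W. P t x w * K w y)"
    using W(1) Suc.IH by (intro sum_mono mult_right_mono K_nonneg) auto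
  also have "\<dots> \<le> P (Suc t) x y" by (rule P_Suc_ge[OF W(1)])
  finally show ?case using W(2) by linarith
qed

definition stationary :: "('a \<Rightarrow> real) \<Rightarrow> bool" where
  "stationary \<pi> \<longleftrightarrow> (\<forall>x\<in>S. \<pi> x \<ge> 0) \<and> (\<forall>x. x \<notin> S \<longrightarrow> \<pi> x = 0) \<and> (\<Sum>x\<in>S. \<pi> x) = 1 \<and>
     (\<forall>y\<in>S. (\<Sum>x\<in>S. \<pi> x * K x y) = \<pi> y)"

lemma stationary_P: assumes st: "stationary \<pi>" and y: "y \<in> S"
  shows "(\<Sum>x\<in>S. \<pi> x * P t x y) = \<pi> y"
  using y
proof (induction t arbitrary: y)
  case 0
  then show ?case using finite_S by (simp add: if_distrib cong: if_cong)
next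
  case (Suc t)
  have "(\<Sum>x\<in>S. \<pi> x * P (Suc t) x y) = (\<Sum>w\<in>S. (\<Sum>x\<in>S. \<pi> x * P t x w) * K w y)"
    by (simp add: P_Suc sum_distrib_left sum_distrib_right mult.assoc) (rule sum.swap)
  also have "\<dots> = (\<Sum>w\<in>S. \<pi> w * K w y)" using Suc.IH by (intro sum.cong refl) auto
  also have "\<dots> = \<pi> y" using st Suc.prems by (auto simp: stationary_def)
  finally show ?case .
qed

definition doeblin :: "nat \<Rightarrow> real \<Rightarrow> ('a \<Rightarrow> real) \<Rightarrow> bool" where
  "doeblin T \<delta> \<nu> \<longleftrightarrow> \<delta> > 0 \<and> (\<forall>y\<in>S. \<nu> y \<ge> 0) \<and> (\<Sum>y\<in>S. \<nu> y) = 1 \<and>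
     (\<forall>x\<in>S. \<forall>y\<in>S. P T x y \<ge> \<delta> * \<nu> y)"

lemma doeblin_le_1: assumes D: "doeblin T \<delta> \<nu>" shows "\<delta> \<le> 1"
proof -
  have "S \<noteq> {}" using D by (auto simp: doeblin_def)
  then obtain x0 where x0: "x0 \<in> S" by blast
  have "\<delta> = (\<Sum>y\<in>S. \<delta> * \<nu> y)" using D by (simp add: doeblin_def sum_distrib_left[symmetric])
  also have "\<dots> \<le> (\<Sum>y\<in>S. P T x0 y)" using D x0 by (intro sum_mono) (simp add: doeblin_def)
  also have "\<dots> = 1" using x0 by (simp add: P_row)
  finally show ?thesis .
qed

text \<open>The contraction: T steps shrink the l1-norm of a zero-sum vector by the factor 1 - delta,
  because the common part delta nu of all rows cancels against the zero total.\<close>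

lemma doeblin_contract:
  assumes D: "doeblin T \<delta> \<nu>" and e0: "(\<Sum>x\<in>S. e x) = 0"
  shows "(\<Sum>y\<in>S. \<bar>\<Sum>x\<in>S. e x * P T x y\<bar>) \<le> (1 - \<delta>) * (\<Sum>x\<in>S. \<bar>e x\<bar>)"
proof -
  have pos: "P T x y - \<delta> * \<nu> y \<ge> 0" if "x \<in> S" "y \<in> S" for x y using D that by (auto simp: doeblin_def)
  have "(\<Sum>y\<in>S. \<bar>\<Sum>x\<in>S. e x * P T x y\<bar>) = (\<Sum>y\<in>S. \<bar>\<Sum>x\<in>S. e x * (P T x y - \<delta> * \<nu> y)\<bar>)"
  proof (intro sum.cong refl)
    fix y
    have "(\<Sum>x\<in>S. e x * (P T x y - \<delta> * \<nu> y)) = (\<Sum>x\<in>S. e x * P T x y) - (\<Sum>x\<in>S. e x) * (\<delta> * \<nu> y)"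
      by (simp add: right_diff_distrib sum_subtractf sum_distrib_right)
    then show "\<bar>\<Sum>x\<in>S. e x * P T x y\<bar> = \<bar>\<Sum>x\<in>S. e x * (P T x y - \<delta> * \<nu> y)\<bar>" using e0 by simp
  qed
  also have "\<dots> \<le> (\<Sum>y\<in>S. \<Sum>x\<in>S. \<bar>e x\<bar> * (P T x y - \<delta> * \<nu> y))"
  proof (intro sum_mono)
    fix y assume y: "y \<in> S"
    have "\<bar>\<Sum>x\<in>S. e x * (P T x y - \<delta> * \<nu> y)\<bar> \<le> (\<Sum>x\<in>S. \<bar>e x * (P T x y - \<delta> * \<nu> y)\<bar>)" by (rule sum_abs)
    also have "\<dots> = (\<Sum>x\<in>S. \<bar>e x\<bar> * (P T x y - \<delta> * \<nu> y))"
      using pos y by (intro sum.cong refl) (simp add: abs_mult)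
    finally show "\<bar>\<Sum>x\<in>S. e x * (P T x y - \<delta> * \<nu> y)\<bar> \<le> (\<Sum>x\<in>S. \<bar>e x\<bar> * (P T x y - \<delta> * \<nu> y))" .
  qed
  also have "\<dots> = (\<Sum>x\<in>S. \<bar>e x\<bar> * ((\<Sum>y\<in>S. P T x y) - \<delta> * (\<Sum>y\<in>S. \<nu> y)))"
    by (subst sum.swap) (simp add: sum_distrib_left sum_subtractf right_diff_distrib)
  also have "\<dots> = (\<Sum>x\<in>S. \<bar>e x\<bar> * (1 - \<delta>))"
    using D by (intro sum.cong refl) (simp add: P_row doeblin_def)
  also have "\<dots> = (1 - \<delta>) * (\<Sum>x\<in>S. \<bar>e x\<bar>)" by (simp add: sum_distrib_left mult.commute)
  finally show ?thesis .
qed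

lemma doeblin_iterate:
  assumes D: "doeblin T \<delta> \<nu>" and e0: "(\<Sum>x\<in>S. e x) = 0"
  shows "(\<Sum>y\<in>S. \<bar>\<Sum>x\<in>S. e x * P (k * T) x y\<bar>) \<le> (1 - \<delta>)^k * (\<Sum>x\<in>S. \<bar>e x\<bar>)"
proof (induction k)
  case 0
  have "(\<Sum>x\<in>S. e x * P 0 x y) = e y" if "y \<in> S" for y
    using that finite_S by (simp add: if_distrib cong: if_cong)
  then show ?case by simp
next
  case (Suc k)
  define E where "E w = (\<Sum>x\<in>S. e x * P (k * T) x w)" for w
  have Esum: "(\<Sum>w\<in>S. E w) = 0"
    unfolding E_def using e0 by (subst sum.swap) (simp add: sum_distrib_left[symmetric] P_row)
  have step: "(\<Sum>x\<in>S. e x * P (Suc k * T) x y) = (\<Sum>w\<in>S. E w * P T w y)" if "y \<in> S" for y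
  proof -
    have "(\<Sum>x\<in>S. e x * P (Suc k * T) x y) = (\<Sum>x\<in>S. e x * (\<Sum>w\<in>S. P (k*T) x w * P T w y))"
      using that by (simp add: P_add[symmetric] add.commute)
    also have "\<dots> = (\<Sum>w\<in>S. E w * P T w y)"
      unfolding E_def by (simp add: sum_distrib_left sum_distrib_right mult.assoc) (rule sum.swap)
    finally show ?thesis .
  qed
  have "(\<Sum>y\<in>S. \<bar>\<Sum>x\<in>S. e x * P (Suc k * T) x y\<bar>) = (\<Sum>y\<in>S. \<bar>\<Sum>w\<in>S. E w * P T w y\<bar>)"
    by (rule sum.cong) (simp_all only: step)
  also have "\<dots> \<le> (1-\<delta>) * (\<Sum>w\<in>S. \<bar>E w\<bar>)" by (rule doeblin_contract[OF D Esum])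
  also have "\<dots> \<le> (1-\<delta>) * ((1-\<delta>)^k * (\<Sum>x\<in>S. \<bar>e x\<bar>))"
    using Suc doeblin_le_1[OF D] unfolding E_def by (intro mult_left_mono) auto
  finally show ?case by simp
qed

text \<open>Geometric convergence of a nonnegative mass vector z0 of total F to F times a stationary law:
  the difference z0 - F pi has total 0 and l1-norm at most 2F.\<close>

lemma doeblin_convergence:
  assumes D: "doeblin T \<delta> \<nu>" and st: "stationary \<pi>"
    and z: "\<forall>x\<in>S. z0 x \<ge> 0" and F: "F = (\<Sum>x\<in>S. z0 x)" and y: "y \<in> S"
  shows "\<bar>(\<Sum>x\<in>S. z0 x * P t x y) - \<pi> y * F\<bar> \<le> 2 * F * (1 - \<delta>) ^ (t div T)"
proof -
  define e where "e x = z0 x - F * \<pi> x" for x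
  define k where "k = t div T"
  define s where "s = t mod T"
  define E where "E w = (\<Sum>x\<in>S. e x * P (k * T) x w)" for w
  have pi1: "(\<Sum>x\<in>S. \<pi> x) = 1" and pinn: "\<forall>x\<in>S. \<pi> x \<ge> 0" using st by (simp_all add: stationary_def)
  have Fnn: "F \<ge> 0" using F z by (simp add: sum_nonneg)
  have esum: "(\<Sum>x\<in>S. e x) = 0"
    unfolding e_def using F pi1 by (simp add: sum_subtractf sum_distrib_left[symmetric])
  have "(\<Sum>x\<in>S. \<bar>e x\<bar>) \<le> (\<Sum>x\<in>S. z0 x + F * \<pi> x)"
    unfolding e_def using z pinn Fnn by (intro sum_mono) (auto simp: abs_le_iff)
  also have "\<dots> = 2 * F" using F pi1 by (simp add: sum.distrib sum_distrib_left[symmetric])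
  finally have Enorm: "(\<Sum>w\<in>S. \<bar>E w\<bar>) \<le> (1-\<delta>)^k * (2 * F)"
    using doeblin_iterate[OF D esum, of k] doeblin_le_1[OF D] unfolding E_def
    by (smt (verit) mult_left_mono zero_le_power)
  have "(\<Sum>x\<in>S. e x * P t x y) = (\<Sum>x\<in>S. z0 x * P t x y) - F * (\<Sum>x\<in>S. \<pi> x * P t x y)"
    unfolding e_def by (simp add: left_diff_distrib sum_subtractf sum_distrib_left mult.assoc)
  then have "(\<Sum>x\<in>S. z0 x * P t x y) - \<pi> y * F = (\<Sum>x\<in>S. e x * P t x y)"
    using stationary_P[OF st y, of t] by (simp add: mult.commute)
  also have "\<dots> = (\<Sum>w\<in>S. E w * P s w y)"
    unfolding E_def k_def s_def P_add[OF y, of "t div T * T" "t mod T", simplified]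
    by (simp add: sum_distrib_left sum_distrib_right mult.assoc) (rule sum.swap)
  finally have eq: "(\<Sum>x\<in>S. z0 x * P t x y) - \<pi> y * F = (\<Sum>w\<in>S. E w * P s w y)" .
  have "\<bar>\<Sum>w\<in>S. E w * P s w y\<bar> \<le> (\<Sum>w\<in>S. \<bar>E w\<bar> * P s w y)"
    using sum_abs[of "\<lambda>w. E w * P s w y" S] by (simp add: abs_mult P_nonneg)
  also have "\<dots> \<le> (\<Sum>w\<in>S. \<bar>E w\<bar>)"
    using P_le_1[OF _ y] by (intro sum_mono mult_right_le_one_le) (auto simp: P_nonneg)
  finally show ?thesis using eq Enorm by (simp add: k_def mult_ac)
qed

lemma stationary_unique:
  assumes D: "doeblin T \<delta> \<nu>" and T: "T \<ge> 1" and s1: "stationary \<pi>1" and s2: "stationary \<pi>2"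
  shows "\<pi>1 = \<pi>2"
proof
  fix y
  show "\<pi>1 y = \<pi>2 y"
  proof (cases "y \<in> S")
    case False
    then show ?thesis using s1 s2 unfolding stationary_def by simp
  next
    case y: True
    have z: "\<forall>x\<in>S. \<pi>1 x \<ge> 0" and F: "1 = (\<Sum>x\<in>S. \<pi>1 x)" using s1 by (auto simp: stationary_def)
    have b: "\<bar>\<pi>1 y - \<pi>2 y\<bar> \<le> 2 * (1-\<delta>)^k" for k
      using doeblin_convergence[OF D s2 z F y, of "k*T"] stationary_P[OF s1 y] T by simp
    show ?thesis
    proof (rule ccontr)
      assume "\<pi>1 y \<noteq> \<pi>2 y"
      then have pos: "\<bar>\<pi>1 y - \<pi>2 y\<bar> / 2 > 0" by simp
      have "1 - \<delta> < 1" using D by (simp add: doeblin_def)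
      then obtain k where "(1-\<delta>)^k < \<bar>\<pi>1 y - \<pi>2 y\<bar> / 2" using real_arch_pow_inv[OF pos] by blast
      then show False using b[of k] by simp
    qed
  qed
qed

end


subsection \<open>The two-lane chain\<close>

abbreviation flip_prob :: "nat \<Rightarrow> real" where "flip_prob U \<equiv> 1 / real U"

lemma mem_states: "(i,b) \<in> states n \<longleftrightarrow> 1 \<le> i \<and> i \<le> n"
  by (auto simp: states_def)

lemma K_fwd_mid:
  assumes "2 \<le> i" "i \<le> n - 1" "n \<ge> 3"
  shows "Kmat n U (i,False) y = (if y = (i,False) then 1/2 else if y = (i+1,False) then (1 - flip_prob U)/2
     else if y = (i+1,True) then (flip_prob U)/2 else 0)"
proof -
  have "(i,False) \<in> states n" "i \<noteq> 1" "i \<noteq> n" using assms by (auto simp: states_def)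
  then show ?thesis unfolding Kmat_def Let_def fst_conv snd_conv by (simp only: if_False if_True not_False_eq_True simp_thms)
qed

lemma K_bwd_mid:
  assumes "2 \<le> i" "i \<le> n - 1" "n \<ge> 3"
  shows "Kmat n U (i,True) y = (if y = (i,True) then 1/2 else if y = (i-1,True) then (1 - flip_prob U)/2
     else if y = (i-1,False) then (flip_prob U)/2 else 0)"
proof -
  have "(i,True) \<in> states n" "i \<noteq> 1" "i \<noteq> n" using assms by (auto simp: states_def)
  then show ?thesis unfolding Kmat_def Let_def fst_conv snd_conv by (simp only: if_False if_True not_False_eq_True simp_thms not_True_eq_False)
qed

lemma K_fwd_1:
  assumes "n \<ge> 3"
  shows "Kmat n U (1,False) y = (if y = (2,False) then 1 - flip_prob U else if y = (2,True) then flip_prob U else 0)"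
proof -
  have "(1,False) \<in> states n" using assms by (auto simp: states_def)
  then show ?thesis unfolding Kmat_def Let_def fst_conv snd_conv by (simp only: if_False if_True not_False_eq_True simp_thms)
qed

lemma K_bwd_1:
  assumes "n \<ge> 3"
  shows "Kmat n U (1,True) y = (if y = (1,False) then 1 - flip_prob U else if y = (1,True) then flip_prob U else 0)"
proof -
  have "(1,True) \<in> states n" using assms by (auto simp: states_def)
  then show ?thesis unfolding Kmat_def Let_def fst_conv snd_conv by (simp only: if_False if_True not_False_eq_True simp_thms not_True_eq_False)
qed

lemma K_fwd_n:
  assumes "n \<ge> 3"
  shows "Kmat n U (n,False) y = (if y = (n,True) then 1 - flip_prob U else if y = (n,False) then flip_prob U else 0)"
proof -
  have "(n,False) \<in> states n" "n \<noteq> 1" using assms by (auto simp: states_def)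
  then show ?thesis unfolding Kmat_def Let_def fst_conv snd_conv by (simp only: if_False if_True not_False_eq_True simp_thms)
qed

lemma K_bwd_n:
  assumes "n \<ge> 3"
  shows "Kmat n U (n,True) y = (if y = (n-1,True) then 1 - flip_prob U else if y = (n-1,False) then flip_prob U else 0)"
proof -
  have "(n,True) \<in> states n" "n \<noteq> 1" using assms by (auto simp: states_def)
  then show ?thesis unfolding Kmat_def Let_def fst_conv snd_conv by (simp only: if_False if_True not_False_eq_True simp_thms not_True_eq_False)
qed

lemma K_out: "x \<notin> states n \<Longrightarrow> Kmat n U x y = 0"
  unfolding Kmat_def Let_def by simp

lemma state_cases:
  assumes "x \<in> states n" "n \<ge> 3"
  obtains (um) i where "x = (i,False)" "2 \<le> i" "i \<le> n - 1"
    | (dm) i where "x = (i,True)" "2 \<le> i" "i \<le> n - 1"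
    | (u1) "x = (1,False)" | (d1) "x = (1,True)" | (un) "x = (n,False)" | (dn) "x = (n,True)"
proof -
  obtain i b where x: "x = (i,b)" by (cases x)
  have "1 \<le> i" "i \<le> n" using assms x by (auto simp: states_def)
  then consider "i = 1" | "i = n" | "2 \<le> i \<and> i \<le> n - 1" by linarith
  then show ?thesis
  proof cases
    case 1 then show ?thesis using x that by (cases b) auto
  next
    case 2 then show ?thesis using x that by (cases b) auto
  next
    case 3 then show ?thesis using x that by (cases b) auto
  qed
qed

lemma Kmat_nonneg: assumes "U \<ge> 1" "n \<ge> 3" shows "Kmat n U x y \<ge> 0"
proof (cases "x \<in> states n")
  case False then show ?thesis by (simp add: K_out)
next
  case True
  have p: "flip_prob U \<le> 1" "flip_prob U \<ge> 0" using assms by auto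
  from True assms(2) show ?thesis
    by (cases rule: state_cases) (use p assms in \<open>auto simp: K_fwd_mid K_bwd_mid K_fwd_1[OF assms(2), simplified] K_bwd_1[OF assms(2), simplified] K_fwd_n K_bwd_n\<close>)
qed


lemma finite_states: "finite (states n)"
  unfolding states_def by simp

lemma sum_if3:
  assumes "finite S" "a \<in> S" "b \<in> S" "c \<in> S" "a \<noteq> b" "a \<noteq> c" "b \<noteq> c"
  shows "(\<Sum>y\<in>S. (if y = a then \<alpha> else if y = b then \<beta> else if y = c then \<gamma> else 0::real)) = \<alpha> + \<beta> + \<gamma>"
proof -
  have "(\<lambda>y. (if y = a then \<alpha> else if y = b then \<beta> else if y = c then \<gamma> else 0::real)) =
        (\<lambda>y. (if y = a then \<alpha> else 0) + (if y = b then \<beta> else 0) + (if y = c then \<gamma> else 0))"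
    using assms by (auto simp: fun_eq_iff)
  then show ?thesis using assms by (simp only: sum.distrib) (simp add: sum.delta)
qed

lemma sum_if2:
  assumes "finite S" "a \<in> S" "b \<in> S" "a \<noteq> b"
  shows "(\<Sum>y\<in>S. (if y = a then \<alpha> else if y = b then \<beta> else 0::real)) = \<alpha> + \<beta>"
proof -
  have "(\<lambda>y. (if y = a then \<alpha> else if y = b then \<beta> else 0::real)) =
        (\<lambda>y. (if y = a then \<alpha> else 0) + (if y = b then \<beta> else 0))"
    using assms by (auto simp: fun_eq_iff)
  then show ?thesis using assms by (simp only: sum.distrib) (simp add: sum.delta)
qed

locale chain =
  fixes n U :: nat
  assumes n3: "n \<ge> 3" and U3: "U \<ge> 3"
begin

abbreviation "S \<equiv> states n"
abbreviation "K \<equiv> Kmat n U"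
abbreviation "p \<equiv> flip_prob U"

lemma p_range: "0 \<le> p" "p \<le> 1" "0 \<le> 1 - p" and p_le_third: "p \<le> 1/3"
  using U3 by (auto simp: field_simps)

lemma Kmat_row: assumes "x \<in> S" shows "(\<Sum>y\<in>S. K x y) = 1"
  using assms n3
proof (cases rule: state_cases)
  case (um i)
  then show ?thesis using n3 by (simp add: K_fwd_mid sum_if3 mem_states field_simps finite_states)
next
  case (dm i)
  then have "(i,True) \<in> S" "(i-1,True) \<in> S" "(i-1,False) \<in> S" "(i,True) \<noteq> (i-1,True)"
    using n3 by (auto simp: mem_states)
  then show ?thesis using dm by (simp add: K_bwd_mid sum_if3 field_simps finite_states)
next
  case u1
  show ?thesis unfolding u1 K_fwd_1[OF n3] using n3 by (subst sum_if2) (auto simp: mem_states finite_states)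
next
  case d1
  show ?thesis unfolding d1 K_bwd_1[OF n3] using n3 by (subst sum_if2) (auto simp: mem_states finite_states)
next
  case un
  then show ?thesis using n3 by (simp add: K_fwd_n sum_if2 mem_states finite_states)
next
  case dn
  then show ?thesis using n3 by (simp add: K_bwd_n sum_if2 mem_states finite_states)
qed

end

sublocale chain \<subseteq> stochastic_kernel "states n" "Kmat n U"
  using finite_states Kmat_nonneg n3 U3 Kmat_row by unfold_locales auto

context chain begin

lemma evolve_eq: "y \<in> S \<Longrightarrow> evolve n U z t y = (\<Sum>x\<in>S. z x * P t x y)"
proof (induction t arbitrary: y)
  case 0
  have "(\<Sum>x\<in>S. z x * P 0 x y) = (\<Sum>x\<in>S. if x = y then z y else 0)"
    by (intro sum.cong) auto
  then show ?case using 0 finite_states by simp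
next
  case (Suc t)
  have "evolve n U z (Suc t) y = (\<Sum>w\<in>S. (\<Sum>x\<in>S. z x * P t x w) * K w y)"
    using Suc.IH by simp
  also have "\<dots> = (\<Sum>x\<in>S. z x * P (Suc t) x y)"
    by (simp add: P_Suc sum_distrib_left sum_distrib_right mult.assoc) (rule sum.swap)
  finally show ?case .
qed

lemma is_stationary_iff: "is_stationary n U = stationary"
  by (simp add: fun_eq_iff is_stationary_def stationary_def)

lemma K_fwd_stay: "2 \<le> k \<Longrightarrow> k \<le> n - 1 \<Longrightarrow> K (k,False) (k,False) = 1/2"
  using n3 by (simp add: K_fwd_mid)
lemma K_fwd_step: "2 \<le> k \<Longrightarrow> k \<le> n - 1 \<Longrightarrow> K (k,False) (k+1,False) = (1-p)/2"
  using n3 by (simp add: K_fwd_mid)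
lemma K_fwd_flip: "2 \<le> k \<Longrightarrow> k \<le> n - 1 \<Longrightarrow> K (k,False) (k+1,True) = p/2"
  using n3 by (simp add: K_fwd_mid)
lemma K_bwd_stay: "2 \<le> k \<Longrightarrow> k \<le> n - 1 \<Longrightarrow> K (k,True) (k,True) = 1/2"
  using n3 by (simp add: K_bwd_mid)
lemma K_bwd_step: "2 \<le> k \<Longrightarrow> k \<le> n - 1 \<Longrightarrow> K (k,True) (k-1,True) = (1-p)/2"
proof -
  assume "2 \<le> k" "k \<le> n - 1"
  moreover have "(k-1,True) \<noteq> (k,True)" using \<open>2 \<le> k\<close> by simp
  ultimately show ?thesis using n3 by (simp only: K_bwd_mid if_False if_True) simp
qed
lemma K_bwd_flip: "2 \<le> k \<Longrightarrow> k \<le> n - 1 \<Longrightarrow> K (k,True) (k-1,False) = p/2"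
  using n3 by (simp add: K_bwd_mid)

lemma K_fwd1_step: "K (1,False) (2,False) = 1-p" using K_fwd_1[OF n3, of U "(2,False)"] by simp
lemma K_bwd1_turn: "K (1,True) (1,False) = 1-p" using K_bwd_1[OF n3, of U "(1,False)"] by simp
lemma K_fwdn_turn: "K (n,False) (n,True) = 1-p" using K_fwd_n[OF n3, of U "(n,True)"] by simp
lemma K_fwdn_stay: "K (n,False) (n,False) = p" using K_fwd_n[OF n3, of U "(n,False)"] by simp
lemma K_bwdn_step: "K (n,True) (n-1,True) = 1-p" using K_bwd_n[OF n3, of U "(n-1,True)"] by simp
lemma K_bwdn_flip: "K (n,True) (n-1,False) = p" using K_bwd_n[OF n3, of U "(n-1,False)"] by simp

lemma P_ge_sum_lane:
  assumes "1 \<le> j1" "j2 \<le> n" "y \<in> S"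
  shows "P (a+c) x y \<ge> (\<Sum>j\<in>{j1..j2}. P a x (j,lane) * P c (j,lane) y)"
proof -
  have W: "(\<lambda>j. (j,lane)) ` {j1..j2} \<subseteq> S" using assms by (auto simp: mem_states)
  have "(\<Sum>j\<in>{j1..j2}. P a x (j,lane) * P c (j,lane) y) = (\<Sum>w\<in>(\<lambda>j. (j,lane)) ` {j1..j2}. P a x w * P c w y)"
    by (subst sum.reindex) (auto simp: inj_on_def)
  also have "\<dots> \<le> P (a+c) x y" by (rule P_ge_sum[OF W assms(3)])
  finally show ?thesis .
qed

lemma P_first_step_ge: assumes "x \<in> S" "w \<in> S" "y \<in> S" shows "P (1 + a) x y \<ge> K x w * P a w y"
  using P_ge_one[OF assms(2,3), where a=1 and b=a and x=x] P_1[OF assms(1)] by simp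

end


subsection \<open>Lower bounds along the lanes\<close>

context chain begin

text \<open>Lower bound for the walk started at the forward state i that flips lane exactly once.
  Forward state k is reached by k - i moves without flipping; backward state j is reached by
  moving forward from i to i+u, flipping to the backward state i+u+1 and moving back to j, i.e. by
  2u+i+2-j moves of which one is a flip.  The number of moves after t steps is Binomial(t,1/2).\<close>

definition flip_times :: "nat \<Rightarrow> nat \<Rightarrow> nat set" where
  "flip_times i j = {u. j \<le> i + u + 1 \<and> i + u + 2 \<le> n}"

lemma finite_flip_times: "finite (flip_times i j)"
  by (rule finite_subset[of _ "{..n}"]) (auto simp: flip_times_def)

definition flip_mass :: "nat \<Rightarrow> nat \<Rightarrow> nat \<Rightarrow> real" where
  "flip_mass i t j = (\<Sum>u\<in>flip_times i j. binom_half t (2*u+i+2-j) * (p * (1-p)^(2*u+i+1-j)))"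

definition lb_flip :: "nat \<Rightarrow> nat \<Rightarrow> nat \<times> bool \<Rightarrow> real" where
  "lb_flip i t y = (case y of (k, False) \<Rightarrow> if i \<le> k \<and> k \<le> n - 1 then binom_half t (k - i) * (1-p)^(k-i) else 0
     | (j, True) \<Rightarrow> if 2 \<le> j \<and> j \<le> n - 1 then flip_mass i t j else 0)"

lemma flip_mass_nonneg: "flip_mass i t j \<ge> 0"
  unfolding flip_mass_def using p_range by (intro sum_nonneg mult_nonneg_nonneg binom_half_nonneg) auto

lemma lb_flip_nonneg: "lb_flip i t y \<ge> 0"
  unfolding lb_flip_def using p_range flip_mass_nonneg by (auto split: prod.splits bool.splits intro!: mult_nonneg_nonneg binom_half_nonneg)

lemma flip_mass_Suc_eq:
  "flip_mass i (Suc t) j = flip_mass i t j / 2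
     + (\<Sum>u\<in>flip_times i j. binom_half t (2*u+i+1-j) * (p * (1-p)^(2*u+i+1-j))) / 2"
proof -
  let ?g = "\<lambda>u. p * (1-p)^(2*u+i+1-j)"
  have "flip_mass i (Suc t) j
      = (\<Sum>u\<in>flip_times i j. binom_half t (2*u+i+2-j) * ?g u / 2 + binom_half t (2*u+i+1-j) * ?g u / 2)"
    unfolding flip_mass_def
  proof (intro sum.cong refl)
    fix u assume "u \<in> flip_times i j"
    then have "2*u+i+2-j = Suc (2*u+i+1-j)" by (auto simp: flip_times_def)
    then obtain m where m: "2*u+i+2-j = Suc m" "2*u+i+1-j = m" by blast
    show "binom_half (Suc t) (2*u+i+2-j) * ?g u = binom_half t (2*u+i+2-j) * ?g u / 2 + binom_half t (2*u+i+1-j) * ?g u / 2"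
      unfolding m binom_half_Suc_Suc by (simp only: add_divide_distrib distrib_right times_divide_eq_left)
  qed
  then show ?thesis unfolding flip_mass_def by (simp only: sum.distrib sum_divide_distrib)
qed

text \<open>The paths with one move less end either in the backward state j+1 (last move a backward step)
  or in the forward state j-1 (last move the flip).\<close>

lemma flip_mass_shift_le:
  assumes "2 \<le> i" "2 \<le> j" "j \<le> n - 1"
  shows "(\<Sum>u\<in>flip_times i j. binom_half t (2*u+i+1-j) * (p * (1-p)^(2*u+i+1-j)))
           \<le> (1-p) * lb_flip i t (j+1, True) + p * lb_flip i t (j-1, False)"
proof -
  let ?f = "\<lambda>u. binom_half t (2*u+i+1-j) * (p * (1-p)^(2*u+i+1-j))"
  have split: "(\<Sum>u\<in>flip_times i j. ?f u) = (\<Sum>u\<in>flip_times i (j+1). ?f u)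
      + (if i + 1 \<le> j then binom_half t (j - 1 - i) * (p * (1-p)^(j-1-i)) else 0)"
  proof (cases "i + 1 \<le> j")
    case True
    have eq: "flip_times i j = insert (j - i - 1) (flip_times i (j+1))" "j - i - 1 \<notin> flip_times i (j+1)"
      using True assms by (auto simp: flip_times_def)
    have "2 * (j - i - 1) + i + 1 - j = j - 1 - i" using True by auto
    then show ?thesis using True unfolding eq(1) sum.insert[OF finite_flip_times eq(2)] by simp
  next
    case False
    then have "flip_times i j = flip_times i (j+1)" by (auto simp: flip_times_def)
    then show ?thesis using False by simp
  qed
  have backward: "(\<Sum>u\<in>flip_times i (j+1). ?f u) \<le> (1-p) * lb_flip i t (j+1, True)"
  proof (cases "j + 1 \<le> n - 1")
    case True
    have "(\<Sum>u\<in>flip_times i (j+1). ?f u)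
        = (\<Sum>u\<in>flip_times i (j+1). (1-p) * (binom_half t (2*u+i+2-(j+1)) * (p * (1-p)^(2*u+i+1-(j+1)))))"
    proof (intro sum.cong refl)
      fix u assume "u \<in> flip_times i (j+1)"
      then have "2*u+i+1-j = 2*u+i+2-(j+1)" "2*u+i+1-j = Suc (2*u+i+1-(j+1))" by (auto simp: flip_times_def)
      then show "?f u = (1-p) * (binom_half t (2*u+i+2-(j+1)) * (p * (1-p)^(2*u+i+1-(j+1))))"
        by (metis mult.left_commute power_Suc)
    qed
    also have "\<dots> = (1-p) * lb_flip i t (j+1, True)"
      using True assms by (simp add: lb_flip_def flip_mass_def sum_distrib_left)
    finally show ?thesis by simp
  next
    case False
    then have "flip_times i (j+1) = {}" using assms by (auto simp: flip_times_def)
    then show ?thesis using lb_flip_nonneg[of i t "(j+1,True)"] p_range by simp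
  qed
  have forward: "(if i + 1 \<le> j then binom_half t (j - 1 - i) * (p * (1-p)^(j-1-i)) else 0) \<le> p * lb_flip i t (j-1, False)"
    using assms lb_flip_nonneg[of i t "(j-1,False)"] p_range by (auto simp: lb_flip_def)
  show ?thesis using split backward forward by linarith
qed

lemma flip_mass_Suc:
  assumes "2 \<le> i" "2 \<le> j" "j \<le> n - 1"
  shows "flip_mass i (Suc t) j \<le> flip_mass i t j / 2 + (1-p)/2 * lb_flip i t (j+1, True) + p/2 * lb_flip i t (j-1, False)"
  using flip_mass_Suc_eq[of i t j] flip_mass_shift_le[OF assms, of t] by simp


text \<open>On the forward lane both lower bounds of this section are the law of the walk that keeps
  moving forward: after t steps it has made k - i moves, each without a flip.  This part of a bound
  satisfies the sub-solution inequality, with the stay at k and the move from k-1 as predecessors.\<close>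

lemma fwd_lane_step:
  assumes LB: "\<And>t k. i \<le> k \<Longrightarrow> k \<le> n - 1 \<Longrightarrow> LB t (k,False) = binom_half t (k-i) * (1-p)^(k-i)"
    and i: "2 \<le> i" and k: "i \<le> k" "k \<le> n - 1"
  shows "\<exists>W\<subseteq>S. LB (Suc t) (k,False) \<le> (\<Sum>w\<in>W. LB t w * K w (k,False))"
proof (cases "k = i")
  case True
  have "LB (Suc t) (k,False) = LB t (k,False) * K (k,False) (k,False)"
    using LB k i True by (simp add: K_fwd_stay)
  then show ?thesis using k i by (intro exI[of _ "{(k,False)}"]) (auto simp: mem_states)
next
  case False
  then obtain m where m: "k - i = Suc m" using k by (cases "k - i") auto
  have K1: "K (k,False) (k,False) = 1/2" using k i by (intro K_fwd_stay) auto
  have "K (k-1,False) (k-1+1,False) = (1-p)/2" using k i m by (intro K_fwd_step) auto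
  then have K2: "K (k-1,False) (k,False) = (1-p)/2" using m by simp
  have L0: "LB (Suc t) (k,False) = binom_half (Suc t) (Suc m) * (1-p)^(Suc m)"
    and L1: "LB t (k,False) = binom_half t (Suc m) * (1-p)^(Suc m)" using LB k m by simp_all
  have "k - 1 - i = m" "i \<le> k - 1" using m by auto
  then have L2: "LB t (k-1,False) = binom_half t m * (1-p)^m" using LB[of "k-1" t] k by simp
  have "LB (Suc t) (k,False) = LB t (k,False) * K (k,False) (k,False) + LB t (k-1,False) * K (k-1,False) (k,False)"
    unfolding K1 K2 L0 L1 L2 binom_half_Suc_Suc power_Suc by (rule half_sum_mult)
  moreover have "(k,False) \<noteq> (k-1,False)" using m by auto
  ultimately show ?thesis using k i
    by (intro exI[of _ "{(k,False),(k-1,False)}"]) (auto simp: mem_states)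
qed

lemma lb_flip_step_fwd:
  assumes i: "2 \<le> i" "i \<le> n - 1" and yb: "y = (k,False)"
  shows "\<exists>W\<subseteq>S. lb_flip i (Suc t) y \<le> (\<Sum>w\<in>W. lb_flip i t w * K w y)"
proof (cases "i \<le> k \<and> k \<le> n - 1")
  case True
  have "lb_flip i t' (k',False) = binom_half t' (k'-i) * (1-p)^(k'-i)" if "i \<le> k'" "k' \<le> n - 1" for t' k'
    using that by (simp add: lb_flip_def)
  from fwd_lane_step[OF this i(1)] True show ?thesis unfolding yb by blast
next
  case False
  have "lb_flip i (Suc t) y = 0" unfolding yb lb_flip_def prod.case bool.case by (rule if_not_P[OF False])
  then show ?thesis by (intro exI[of _ "{}"]) auto
qed

lemma lb_flip_step_bwd:
  assumes i: "2 \<le> i" "i \<le> n - 1" and yb: "y = (k,True)"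
  shows "\<exists>W\<subseteq>S. lb_flip i (Suc t) y \<le> (\<Sum>w\<in>W. lb_flip i t w * K w y)"
proof (cases "2 \<le> k \<and> k \<le> n - 1")
  case True
  let ?W = "{(k,True),(k+1,True),(k-1,False)}"
  have W: "?W \<subseteq> S" using True by (auto simp: mem_states)
  have A: "lb_flip i t (k,True) * K (k,True) y = flip_mass i t k / 2"
    using True yb by (simp add: lb_flip_def K_bwd_stay)
  have B: "lb_flip i t (k+1,True) * K (k+1,True) y \<ge> (1-p)/2 * lb_flip i t (k+1,True)"
  proof (cases "k + 1 \<le> n - 1")
    case True
    have e: "K (k+1,True) (k,True) = (1-p)/2" using K_bwd_step[of "k+1"] True \<open>2 \<le> k \<and> k \<le> n - 1\<close> by simp
    show ?thesis unfolding yb e by simp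
  next
    case False
    then have "lb_flip i t (k+1,True) = 0" by (simp add: lb_flip_def)
    then show ?thesis by simp
  qed
  have C: "lb_flip i t (k-1,False) * K (k-1,False) y \<ge> p/2 * lb_flip i t (k-1,False)"
  proof (cases "2 \<le> k - 1")
    case True
    have "k - 1 + 1 = k" using True by simp
    have "k - 1 \<le> n - 1" using \<open>2 \<le> k \<and> k \<le> n - 1\<close> by arith
    have e0: "K (k-1,False) (k-1+1,True) = p/2" by (rule K_fwd_flip) (use True \<open>k - 1 \<le> n - 1\<close> in auto)
    have e: "K (k-1,False) (k,True) = p/2" using e0 unfolding \<open>k - 1 + 1 = k\<close> .
    show ?thesis unfolding yb e by simp
  next
    case False
    then have "lb_flip i t (k-1,False) = 0" using i by (simp add: lb_flip_def)
    then show ?thesis by simp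
  qed
  have "lb_flip i (Suc t) y = flip_mass i (Suc t) k"
    unfolding yb lb_flip_def prod.case bool.case by (rule if_P[OF True])
  also have "\<dots> \<le> flip_mass i t k / 2 + (1-p)/2 * lb_flip i t (k+1, True) + p/2 * lb_flip i t (k-1, False)"
    using True by (intro flip_mass_Suc[OF i(1)]) auto
  also have "\<dots> \<le> (\<Sum>w\<in>?W. lb_flip i t w * K w y)"
  proof -
    have d: "(k,True) \<noteq> (k+1,True)" "(k,True) \<noteq> (k-1,False)" "(k+1,True) \<noteq> (k-1,False)" by auto
    have sum3: "(\<Sum>w\<in>{a,b,c}. f w) = f a + f b + f c" if "a \<noteq> b" "a \<noteq> c" "b \<noteq> c"
      for a b c :: "nat \<times> bool" and f :: "nat \<times> bool \<Rightarrow> real"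
      using that by simp
    show ?thesis unfolding sum3[OF d] using A B C by linarith
  qed
  finally show ?thesis using W by blast
next
  case False
  have "lb_flip i (Suc t) y = 0" unfolding yb lb_flip_def prod.case bool.case by (rule if_not_P[OF False])
  then show ?thesis by (intro exI[of _ "{}"]) auto
qed

lemma lb_flip_step:
  assumes i: "2 \<le> i" "i \<le> n - 1"
  shows "\<exists>W\<subseteq>S. lb_flip i (Suc t) y \<le> (\<Sum>w\<in>W. lb_flip i t w * K w y)"
proof -
  obtain k b where "y = (k,b)" by (cases y)
  then show ?thesis using lb_flip_step_fwd[OF i] lb_flip_step_bwd[OF i] by (cases b) auto
qed

lemma lb_flip_init: "lb_flip i 0 y \<le> (if y = (i,False) then 1 else 0)"
proof -
  have "flip_mass i 0 k = 0" for k unfolding flip_mass_def by (intro sum.neutral) (auto simp: flip_times_def)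
  then show ?thesis by (cases y) (auto simp: lb_flip_def split: bool.splits)
qed

lemma lb_flip_le_P:
  assumes i: "2 \<le> i" "i \<le> n - 1" and y: "y \<in> S"
  shows "lb_flip i t y \<le> P t (i,False) y"
  by (rule lower_solution_le_P[where LB = "lb_flip i"]) (use lb_flip_nonneg lb_flip_init lb_flip_step[OF i] y in auto)

lemma flip_mass_ge:
  "flip_mass i t j \<ge> p * (1-p)^t * (\<Sum>u\<in>flip_times i j. binom_half t (2*u+i+2-j))"
proof -
  have "p * (1-p)^t * (\<Sum>u\<in>flip_times i j. binom_half t (2*u+i+2-j)) = (\<Sum>u\<in>flip_times i j. binom_half t (2*u+i+2-j) * (p * (1-p)^t))"
    by (simp add: sum_distrib_left mult_ac)
  also have "\<dots> \<le> flip_mass i t j"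
    unfolding flip_mass_def
  proof (intro sum_mono)
    fix u assume u: "u \<in> flip_times i j"
    show "binom_half t (2*u+i+2-j) * (p * (1-p)^t) \<le> binom_half t (2*u+i+2-j) * (p * (1-p)^(2*u+i+1-j))"
    proof (cases "2*u+i+2-j > t")
      case True then show ?thesis by (simp add: binom_half_beyond)
    next
      case False
      then have "2*u+i+1-j \<le> t" by simp
      then have "(1-p)^t \<le> (1-p)^(2*u+i+1-j)" using p_range by (intro power_decreasing) auto
      then show ?thesis using p_range binom_half_nonneg by (intro mult_left_mono) auto
    qed
  qed
  finally show ?thesis .
qed

text \<open>The numbers of moves 2u+i+2-j of the paths counted by flip_mass form an arithmetic
  progression; when it covers a window of half-width w around t/2 it carries Binomial mass about 1/2.\<close>

lemma flip_times_mass: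
  assumes i: "2 \<le> i" "i + 2 \<le> n" and j: "2 \<le> j" "j \<le> n - 1" and w: "w > 0" and t: "t \<ge> 1"
    and c1: "real j + 2 \<le> real i + real t / 2 - w" and c2: "real i + 2 \<le> real j + real t / 2 - w"
    and c3: "real t / 2 + w \<le> 2 * real n - 2 - real i - real j"
  shows "(\<Sum>u\<in>flip_times i j. binom_half t (2*u+i+2-j)) \<ge> 1/2 - real t / (4 * w^2)"
proof -
  define a where "a = j - (i+1)"
  define b where "b = n - 2 - i"
  define c where "c = 2*a + i + 2 - j"
  have ab: "a \<le> b" using i j by (simp add: a_def b_def)
  have Ueq: "flip_times i j = {a..b}" using i j by (auto simp: flip_times_def a_def b_def)
  have creal: "real c \<le> real t / 2 - w"
  proof (cases "i + 1 \<le> j")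
    case True then have "c = j - i" by (simp add: c_def a_def)
    then show ?thesis using True c1 by (simp add: of_nat_diff)
  next
    case False then have "c = i + 2 - j" by (simp add: c_def a_def)
    then show ?thesis using False c2 by (simp add: of_nat_diff)
  qed
  have ceq: "2*(b-a) + c = 2*n - 2 - i - j" using i j ab by (simp add: c_def a_def b_def)
  have c2real: "real (2*(b-a) + c) \<ge> real t / 2 + w"
    unfolding ceq using c3 i j by (simp add: of_nat_diff)
  have "(\<Sum>u\<in>flip_times i j. binom_half t (2*u+i+2-j)) = (\<Sum>v\<in>{0..b-a}. binom_half t (2*(v+a)+i+2-j))"
    unfolding Ueq using sum.shift_bounds_cl_nat_ivl[of "\<lambda>u. binom_half t (2*u+i+2-j)" 0 a "b-a"] ab by simp
  also have "\<dots> = (\<Sum>v\<in>{0..b-a}. binom_half t (2*v + c))"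
  proof (intro sum.cong refl)
    fix v
    have jle: "j \<le> 2*a + i + 2" by (simp add: a_def)
    then have "2*(v+a)+i+2-j = 2*v + c" unfolding c_def by arith
    then show "binom_half t (2*(v+a)+i+2-j) = binom_half t (2*v + c)" by simp
  qed
  finally have eq: "(\<Sum>u\<in>flip_times i j. binom_half t (2*u+i+2-j)) = (\<Sum>v\<in>{0..b-a}. binom_half t (2*v + c))" .
  have win: "(\<Sum>v\<in>{0..b-a}. binom_half t (2*v + c)) \<ge> 1/2 - real t / (4 * w^2)"
    using binom_half_window_parity[OF w t, of 0 c "b-a"] creal c2real by simp
  show ?thesis using eq win by simp
qed

lemma flip_fwd_to_bwd:
  assumes i: "2 \<le> i" "i + 2 \<le> n" and j: "2 \<le> j" "j \<le> n - 1" and w: "w > 0" and t: "t \<ge> 1"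
    and c1: "real j + 2 \<le> real i + real t / 2 - w" and c2: "real i + 2 \<le> real j + real t / 2 - w"
    and c3: "real t / 2 + w \<le> 2 * real n - 2 - real i - real j"
  shows "P t (i,False) (j,True) \<ge> p * (1-p)^t * (1/2 - real t / (4 * w^2))"
proof -
  have "p * (1-p)^t * (1/2 - real t / (4 * w^2)) \<le> p * (1-p)^t * (\<Sum>u\<in>flip_times i j. binom_half t (2*u+i+2-j))"
    using flip_times_mass[OF assms] p_range by (intro mult_left_mono) auto
  also have "\<dots> \<le> flip_mass i t j" by (rule flip_mass_ge)
  also have "\<dots> = lb_flip i t (j,True)" using j by (simp add: lb_flip_def)
  also have "\<dots> \<le> P t (i,False) (j,True)"
    using lb_flip_le_P[of i "(j,True)" t] i j by (simp add: mem_states)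
  finally show ?thesis .
qed

end
context chain begin

text \<open>Lower bound for the walk started at the forward state i that never flips: it runs forward
  to n, turns to n' (one extra lazy step at n) and runs back.  The backward state k is reached after
  2n-i-k+1 moves, the last turn included.\<close>

definition lb_turn :: "nat \<Rightarrow> nat \<Rightarrow> nat \<times> bool \<Rightarrow> real" where
  "lb_turn i t y = (case y of (k, False) \<Rightarrow>
        if i \<le> k \<and> k \<le> n - 1 then binom_half t (k - i) * (1-p)^(k-i)
        else if k = n \<and> 1 \<le> t then binom_half (t-1) (n-1-i) * (1-p)^(n-i) / 2 else 0
     | (k, True) \<Rightarrow>
        if k = n \<and> 2 \<le> t then binom_half (t-2) (n-1-i) * (1-p)^(n-i+1) / 2
        else if 2 \<le> k \<and> k \<le> n - 1 \<and> 2 \<le> t then binom_half (t-2) (2*n-i-k-1) * (1-p)^(2*n-i-k+1) else 0)"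

text \<open>Simplification facts that decide the case distinctions of lb_turn at n - 1.\<close>

lemma n_not_le_pred [simp]: "\<not> (n \<le> n - Suc 0)" and pred_n_neq_n [simp]: "n - Suc 0 \<noteq> n"
  using n3 by simp_all

lemma lb_turn_nonneg: "lb_turn i t y \<ge> 0"
  unfolding lb_turn_def using p_range by (auto split: prod.splits bool.splits intro!: mult_nonneg_nonneg binom_half_nonneg divide_nonneg_nonneg)

lemma lb_turn_step_fwd:
  assumes i: "2 \<le> i" "i \<le> n - 1" and kS: "1 \<le> k" "k \<le> n" and yb: "y = (k,False)"
  shows "\<exists>W\<subseteq>S. lb_turn i (Suc t) y \<le> (\<Sum>w\<in>W. lb_turn i t w * K w y)"
proof -
  consider "i \<le> k \<and> k \<le> n - 1" | "k = n" | "k < i" using kS i by linarith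
  then show ?thesis
  proof cases
    case 1
    have "lb_turn i t' (k',False) = binom_half t' (k'-i) * (1-p)^(k'-i)" if "i \<le> k'" "k' \<le> n - 1" for t' k'
      using that by (simp add: lb_turn_def)
    from fwd_lane_step[OF this i(1)] 1 show ?thesis unfolding yb by blast
  next
    case 2
    have "K (n-1,False) (n-1+1,False) = (1-p)/2" using i n3 by (intro K_fwd_step) auto
    then have K2: "K (n-1,False) (n,False) = (1-p)/2" using n3 by simp
    have L1: "lb_turn i t (n-1,False) = binom_half t (n-1-i) * (1-p)^(n-1-i)" using i by (simp add: lb_turn_def)
    have L2: "lb_turn i (Suc t) (n,False) = binom_half t (n-1-i) * (1-p)^(n-i) / 2"
      using i n3 by (simp add: lb_turn_def)
    have pw: "(1-p)^(n-i) = (1-p)^(n-1-i) * (1-p)"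
    proof -
      have "n - i = Suc (n-1-i)" using i n3 by arith
      then show ?thesis by (simp add: mult.commute)
    qed
    have "lb_turn i (Suc t) y = lb_turn i t (n-1,False) * K (n-1,False) y"
      unfolding yb 2 L1 L2 K2 pw by simp
    then show ?thesis using i n3 by (intro exI[of _ "{(n-1,False)}"]) (auto simp: mem_states)
  next
    case 3
    then have "lb_turn i (Suc t) y = 0" unfolding yb using n3 i by (auto simp: lb_turn_def)
    then show ?thesis by (intro exI[of _ "{}"]) auto
  qed
qed

lemma lb_turn_step_turn:
  assumes i: "2 \<le> i" "i \<le> n - 1" and kn: "k = n" and yb: "y = (k,True)"
  shows "\<exists>W\<subseteq>S. lb_turn i (Suc t) y \<le> (\<Sum>w\<in>W. lb_turn i t w * K w y)"
proof -
  have K1: "K (n,False) (n,True) = 1 - p" using n3 by (simp add: K_fwd_n)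
  have "lb_turn i (Suc t) y \<le> lb_turn i t (n,False) * K (n,False) y"
  proof (cases "t \<ge> 1")
    case True
    then obtain t' where t': "t = Suc t'" by (cases t) auto
    have "lb_turn i (Suc t) y = binom_half t' (n-1-i) * (1-p)^(n-i+1) / 2" unfolding yb kn t' by (simp add: lb_turn_def)
    also have "\<dots> = lb_turn i t (n,False) * K (n,False) y"
      unfolding yb kn K1 t' using i by (simp add: lb_turn_def)
    finally show ?thesis by simp
  next
    case False
    then show ?thesis unfolding yb kn using lb_turn_nonneg[of i t "(n,False)"] K1 p_range by (simp add: lb_turn_def)
  qed
  then show ?thesis using n3 by (intro exI[of _ "{(n,False)}"]) (auto simp: mem_states)
qed

lemma lb_turn_step_after_turn:
  assumes i: "2 \<le> i" "i \<le> n - 1" and k: "2 \<le> k \<and> k + 1 = n" and yb: "y = (k,True)"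
  shows "\<exists>W\<subseteq>S. lb_turn i (Suc t) y \<le> (\<Sum>w\<in>W. lb_turn i t w * K w y)"
proof -
  have kk: "k = n - 1" using k by arith
  define m where "m = n - 1 - i"
  have e: "2*n-i-k-1 = Suc m" "2*n-i-k+1 = m + 3" "n - i + 1 = m + 2" "n - i = Suc m"
    using k i by (auto simp: m_def)
  have W: "{(k,True),(n,True)} \<subseteq> S" "(k,True) \<noteq> (n,True)" using k by (auto simp: mem_states)
  have K1: "K (k,True) (k,True) = 1/2" by (rule K_bwd_stay) (use k in auto)
  have K2: "K (n,True) (k,True) = 1 - p" unfolding kk using n3 by (simp add: K_bwd_n)
  have "lb_turn i (Suc t) y \<le> lb_turn i t (k,True) * K (k,True) y + lb_turn i t (n,True) * K (n,True) y"
  proof -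
    consider "t = 0" | "t = 1" | t'' where "t = Suc (Suc t'')" by (metis One_nat_def not0_implies_Suc)
    then show ?thesis
    proof cases
      case 1
      then show ?thesis unfolding yb using k lb_turn_nonneg[of i t] K_nonneg by (simp add: lb_turn_def)
    next
      case 2
      have "lb_turn i (Suc t) y = 0" unfolding yb 2 using k e by (simp add: lb_turn_def)
      then show ?thesis using lb_turn_nonneg[of i t] K_nonneg by (simp add: add_nonneg_nonneg)
    next
      case 3
      have L0: "lb_turn i (Suc t) (k,True) = binom_half (Suc t'') (Suc m) * (1-p)^(m+3)"
        unfolding 3 using k e kk by (simp add: lb_turn_def power_add power3_eq_cube)
      have L1: "lb_turn i t (k,True) = binom_half t'' (Suc m) * (1-p)^(m+3)"
        unfolding 3 using k e kk by (simp add: lb_turn_def power_add power3_eq_cube)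
      have L2: "lb_turn i t (n,True) = binom_half t'' m * (1-p)^(m+2) / 2"
        unfolding 3 using e by (simp add: lb_turn_def m_def)
      show ?thesis unfolding yb L0 L1 L2 K1 K2 binom_half_Suc_Suc half_split_pow by (simp add: field_simps)
    qed
  qed
  then show ?thesis using W by (intro exI[of _ "{(k,True),(n,True)}"]) auto
qed

lemma lb_turn_step_bwd_lane:
  assumes i: "2 \<le> i" "i \<le> n - 1" and k: "2 \<le> k \<and> k + 2 \<le> n" and yb: "y = (k,True)"
  shows "\<exists>W\<subseteq>S. lb_turn i (Suc t) y \<le> (\<Sum>w\<in>W. lb_turn i t w * K w y)"
proof -
  define m where "m = 2*n-i-k-2"
  have "k \<le> n - 1" "k + 1 \<le> n - 1" using k by arith+
  have e: "2*n-i-k-1 = Suc m" "2*n-i-k+1 = m + 3" "2*n-i-(k+1)-1 = m" "2*n-i-(k+1)+1 = m + 2"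
    using k i by (auto simp: m_def)
  have W: "{(k,True),(k+1,True)} \<subseteq> S" "(k,True) \<noteq> (k+1,True)" using k by (auto simp: mem_states)
  have K1: "K (k,True) (k,True) = 1/2" by (rule K_bwd_stay) (use k in auto)
  have K2': "K (k+1,True) (k+1-1,True) = (1-p)/2" by (rule K_bwd_step) (use k in auto)
  have K2: "K (k+1,True) (k,True) = (1-p)/2" using K2' by simp
  have "lb_turn i (Suc t) y \<le> lb_turn i t (k,True) * K (k,True) y + lb_turn i t (k+1,True) * K (k+1,True) y"
  proof -
    consider "t = 0" | "t = 1" | t'' where "t = Suc (Suc t'')" by (metis One_nat_def not0_implies_Suc)
    then show ?thesis
    proof cases
      case 1
      then show ?thesis unfolding yb using k lb_turn_nonneg[of i t] K_nonneg by (simp add: lb_turn_def)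
    next
      case 2
      have "lb_turn i (Suc t) y = 0" unfolding yb 2 using k e by (simp add: lb_turn_def)
      then show ?thesis using lb_turn_nonneg[of i t] K_nonneg by (simp add: add_nonneg_nonneg)
    next
      case 3
      have L0: "lb_turn i (Suc t) (k,True) = binom_half (Suc t'') (Suc m) * (1-p)^(m+3)"
        unfolding 3 using k e \<open>k \<le> n - 1\<close> by (simp add: lb_turn_def power_add power3_eq_cube)
      have L1: "lb_turn i t (k,True) = binom_half t'' (Suc m) * (1-p)^(m+3)"
        unfolding 3 using k e \<open>k \<le> n - 1\<close> \<open>k + 1 \<le> n - 1\<close> by (simp add: lb_turn_def power_add power3_eq_cube power2_eq_square)
      have L2: "lb_turn i t (k+1,True) = binom_half t'' m * (1-p)^(m+2)"
        unfolding 3 using k e \<open>k \<le> n - 1\<close> \<open>k + 1 \<le> n - 1\<close> by (simp add: lb_turn_def power_add power3_eq_cube power2_eq_square)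
      show ?thesis unfolding yb L0 L1 L2 K1 K2 binom_half_Suc_Suc half_split_pow by simp
    qed
  qed
  then show ?thesis using W by (intro exI[of _ "{(k,True),(k+1,True)}"]) auto
qed

lemma lb_turn_step_bwd:
  assumes i: "2 \<le> i" "i \<le> n - 1" and kS: "1 \<le> k" "k \<le> n" and yb: "y = (k,True)"
  shows "\<exists>W\<subseteq>S. lb_turn i (Suc t) y \<le> (\<Sum>w\<in>W. lb_turn i t w * K w y)"
proof -
  consider "k = n" | "2 \<le> k \<and> k + 1 = n" | "2 \<le> k \<and> k + 2 \<le> n" | "k = 1" using kS by linarith
  then show ?thesis
  proof cases
    case 4
    have "lb_turn i (Suc t) y = 0" unfolding yb 4 using n3 by (simp add: lb_turn_def)
    then show ?thesis by (intro exI[of _ "{}"]) auto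
  qed (use lb_turn_step_turn[OF i _ yb] lb_turn_step_after_turn[OF i _ yb] lb_turn_step_bwd_lane[OF i _ yb] in auto)
qed

lemma lb_turn_step:
  assumes i: "2 \<le> i" "i \<le> n - 1" and y: "y \<in> S"
  shows "\<exists>W\<subseteq>S. lb_turn i (Suc t) y \<le> (\<Sum>w\<in>W. lb_turn i t w * K w y)"
proof -
  obtain k b where yk: "y = (k,b)" by (cases y)
  have k: "1 \<le> k" "k \<le> n" using y yk by (auto simp: mem_states)
  show ?thesis using lb_turn_step_fwd[OF i k] lb_turn_step_bwd[OF i k] yk by (cases b) auto
qed


lemma lb_turn_init: "lb_turn i 0 y \<le> (if y = (i,False) then 1 else 0)"
  by (cases y) (auto simp: lb_turn_def split: bool.splits)

lemma lb_turn_le_P: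
  assumes i: "2 \<le> i" "i \<le> n - 1" and y: "y \<in> S"
  shows "lb_turn i t y \<le> P t (i,False) y"
  by (rule lower_solution_le_P[where LB = "lb_turn i"]) (use lb_turn_nonneg lb_turn_init lb_turn_step[OF i] y in auto)

text \<open>Mass that the walk from forward state i puts on a window k1..k2 of the backward lane after
  passing the right end; the numbers of moves 2n-i-k-1 must cover a window around (t-2)/2.\<close>

lemma turn_right_mass:
  assumes i: "2 \<le> i" "i \<le> n - 1" and k: "2 \<le> k1" "k1 \<le> k2" "k2 \<le> n - 1"
    and w: "w > 0" and t: "t \<ge> 2"
    and c1: "real (2*n - i - k2 - 1) \<le> (real t - 2) / 2 - w"
    and c2: "real (2*n - i - k1 - 1) \<ge> (real t - 2) / 2 + w"
  shows "(\<Sum>k\<in>{k1..k2}. P t (i,False) (k,True)) \<ge> (1-p)^(2*n) * (1 - (real t - 2) / (4 * w^2))"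
proof -
  define C where "C = 2*n - i - 1"
  have Ck: "k2 < C" using i k by (simp add: C_def)
  have "(1-p)^(2*n) * (1 - (real t - 2) / (4 * w^2)) \<le> (1-p)^(2*n) * (\<Sum>M\<in>{C-k2..C-k1}. binom_half (t-2) M)"
  proof (rule mult_left_mono)
    have rt: "real (t - 2) = real t - 2" using t by (simp add: of_nat_diff)
    have "C - k2 = 2*n - i - k2 - 1" "C - k1 = 2*n - i - k1 - 1" by (simp_all add: C_def)
    then show "1 - (real t - 2) / (4 * w^2) \<le> (\<Sum>M\<in>{C-k2..C-k1}. binom_half (t-2) M)"
      using binom_half_window[OF w, of "C-k2" "t-2" "C-k1"] c1 c2 rt by simp
  qed (use p_range in simp)
  also have "\<dots> = (\<Sum>k\<in>{k1..k2}. binom_half (t-2) (C - k) * (1-p)^(2*n))"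
  proof -
    have "(\<Sum>k\<in>{k1..k2}. binom_half (t-2) (C - k)) = (\<Sum>M\<in>{C-k2..C-k1}. binom_half (t-2) M)"
      by (rule sum.reindex_bij_witness[where i = "\<lambda>M. C - M" and j = "\<lambda>k. C - k"]) (use Ck in auto)
    then show ?thesis by (simp only: sum_distrib_right[symmetric] mult.commute)
  qed
  also have "\<dots> \<le> (\<Sum>k\<in>{k1..k2}. lb_turn i t (k,True))"
  proof (intro sum_mono)
    fix k assume kk: "k \<in> {k1..k2}"
    then have kr: "2 \<le> k" "k \<le> n - 1" "k \<noteq> n" using k n3 by auto
    have e: "C - k = 2*n-i-k-1" by (simp add: C_def)
    have "(1-p)^(2*n) \<le> (1-p)^(2*n-i-k+1)" using p_range kr i by (intro power_decreasing) auto
    then have "binom_half (t-2) (C - k) * (1-p)^(2*n) \<le> binom_half (t-2) (2*n-i-k-1) * (1-p)^(2*n-i-k+1)"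
      unfolding e by (intro mult_left_mono binom_half_nonneg)
    then show "binom_half (t-2) (C - k) * (1-p)^(2*n) \<le> lb_turn i t (k,True)"
      using kr t by (simp add: lb_turn_def)
  qed
  also have "\<dots> \<le> (\<Sum>k\<in>{k1..k2}. P t (i,False) (k,True))"
    using k by (intro sum_mono lb_turn_le_P[OF i]) (auto simp: mem_states)
  finally show ?thesis .
qed

definition reflect :: "nat \<times> bool \<Rightarrow> nat \<times> bool" where
  "reflect x = (n + 1 - fst x, \<not> snd x)"

lemma reflect_states: "x \<in> S \<Longrightarrow> reflect x \<in> S"
  by (cases x) (auto simp: reflect_def mem_states)

lemma reflect_reflect: "x \<in> S \<Longrightarrow> reflect (reflect x) = x"
  by (cases x) (auto simp: reflect_def mem_states)

lemma K_reflect: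
  assumes x: "x \<in> S" and y: "y \<in> S"
  shows "K (reflect x) (reflect y) = K x y"
proof -
  obtain j c where yc: "y = (j,c)" by (cases y)
  have j: "1 \<le> j" "j \<le> n" using y yc by (auto simp: mem_states)
  from x n3 show ?thesis
  proof (cases rule: state_cases)
    case (um i)
    have px: "reflect x = (n+1-i, True)" using um by (simp add: reflect_def)
    have a: "2 \<le> n+1-i" "n+1-i \<le> n-1" using um by auto
    show ?thesis unfolding px K_bwd_mid[OF a n3] unfolding um(1) K_fwd_mid[OF um(2,3) n3] yc
      using j um by (auto simp: reflect_def)
  next
    case (dm i)
    have px: "reflect x = (n+1-i, False)" using dm by (simp add: reflect_def)
    have a: "2 \<le> n+1-i" "n+1-i \<le> n-1" using dm by auto
    show ?thesis unfolding px K_fwd_mid[OF a n3] unfolding dm(1) K_bwd_mid[OF dm(2,3) n3] yc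
      using j dm by (auto simp: reflect_def)
  next
    case u1
    have px: "reflect x = (n, True)" using u1 by (simp add: reflect_def)
    show ?thesis unfolding px K_bwd_n[OF n3] unfolding u1 K_fwd_1[OF n3] yc
      using j n3 by (auto simp: reflect_def)
  next
    case d1
    have px: "reflect x = (n, False)" using d1 by (simp add: reflect_def)
    show ?thesis unfolding px K_fwd_n[OF n3] unfolding d1 K_bwd_1[OF n3] yc
      using j n3 by (auto simp: reflect_def)
  next
    case un
    have px: "reflect x = (1, True)" using un by (simp add: reflect_def)
    show ?thesis unfolding px K_bwd_1[OF n3] unfolding un K_fwd_n[OF n3] yc
      using j n3 by (auto simp: reflect_def)
  next
    case dn
    have px: "reflect x = (1, False)" using dn by (simp add: reflect_def)
    show ?thesis unfolding px K_fwd_1[OF n3] unfolding dn K_bwd_n[OF n3] yc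
      using j n3 by (auto simp: reflect_def)
  qed
qed

lemma P_reflect:
  assumes x: "x \<in> S" and y: "y \<in> S"
  shows "P t (reflect x) (reflect y) = P t x y"
  using y
proof (induction t arbitrary: y)
  case 0
  have "reflect y = reflect x \<longleftrightarrow> y = x" using x 0 reflect_reflect by metis
  then show ?case by (simp add: P_0)
next
  case (Suc t)
  have "P (Suc t) (reflect x) (reflect y) = (\<Sum>w\<in>S. P t (reflect x) w * K w (reflect y))" by (rule P_Suc)
  also have "\<dots> = (\<Sum>v\<in>S. P t (reflect x) (reflect v) * K (reflect v) (reflect y))"
    by (rule sum.reindex_bij_witness[where i = reflect and j = reflect]) (auto simp: reflect_states reflect_reflect)
  also have "\<dots> = (\<Sum>v\<in>S. P t x v * K v y)"
    using Suc by (intro sum.cong refl) (simp add: K_reflect x)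
  also have "\<dots> = P (Suc t) x y" by (rule P_Suc[symmetric])
  finally show ?case .
qed

lemma flip_bwd_to_fwd:
  assumes i: "3 \<le> i" "i \<le> n - 1" and j: "2 \<le> j" "j \<le> n - 1" and w: "w > 0" and t: "t \<ge> 1"
    and c1: "real i + 2 \<le> real j + real t / 2 - w" and c2: "real j + 2 \<le> real i + real t / 2 - w"
    and c3: "real t / 2 + w \<le> real i + real j - 4"
  shows "P t (i,True) (j,False) \<ge> p * (1-p)^t * (1/2 - real t / (4 * w^2))"
proof -
  have "P t (i,True) (j,False) = P t (reflect (n+1-i, False)) (reflect (n+1-j, True))"
    using i j by (simp add: reflect_def)
  also have "\<dots> = P t (n+1-i, False) (n+1-j, True)"
    using i j by (intro P_reflect) (auto simp: mem_states)
  finally have e: "P t (i,True) (j,False) = P t (n+1-i, False) (n+1-j, True)" .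
  have "P t (n+1-i, False) (n+1-j, True) \<ge> p * (1-p)^t * (1/2 - real t / (4 * w^2))"
    by (rule flip_fwd_to_bwd) (use i j w t c1 c2 c3 in \<open>auto simp: of_nat_diff\<close>)
  then show ?thesis using e by simp
qed

lemma turn_left_mass:
  assumes i: "2 \<le> i" "i \<le> n - 1" and k: "2 \<le> k1" "k1 \<le> k2" "k2 \<le> n - 1"
    and w: "w > 0" and t: "t \<ge> 2"
    and c1: "real (i + k1 - 3) \<le> (real t - 2) / 2 - w"
    and c2: "real (i + k2 - 3) \<ge> (real t - 2) / 2 + w"
  shows "(\<Sum>k\<in>{k1..k2}. P t (i,True) (k,False)) \<ge> (1-p)^(2*n) * (1 - (real t - 2) / (4 * w^2))"
proof -
  have "(\<Sum>k\<in>{k1..k2}. P t (i,True) (k,False)) = (\<Sum>k\<in>{k1..k2}. P t (n+1-i, False) (n+1-k, True))"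
  proof (intro sum.cong refl)
    fix k assume kk: "k \<in> {k1..k2}"
    have "P t (i,True) (k,False) = P t (reflect (n+1-i, False)) (reflect (n+1-k, True))"
    proof -
      have "Suc n - (Suc n - k) = k" using kk k by auto
      then show ?thesis using i by (simp add: reflect_def)
    qed
    also have "\<dots> = P t (n+1-i, False) (n+1-k, True)"
      using i k kk by (intro P_reflect) (auto simp: mem_states)
    finally show "P t (i,True) (k,False) = P t (n+1-i, False) (n+1-k, True)" .
  qed
  also have "\<dots> = (\<Sum>k\<in>{n+1-k2..n+1-k1}. P t (n+1-i, False) (k, True))"
    by (rule sum.reindex_bij_witness[where i = "\<lambda>k. n+1-k" and j = "\<lambda>k. n+1-k"]) (use k in auto)
  finally have e: "(\<Sum>k\<in>{k1..k2}. P t (i,True) (k,False)) = (\<Sum>k\<in>{n+1-k2..n+1-k1}. P t (n+1-i, False) (k, True))" .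
  have a1: "2*n - (n+1-i) - (n+1-k1) - 1 = i + k1 - 3" "2*n - (n+1-i) - (n+1-k2) - 1 = i + k2 - 3"
    using i k by auto
  have "(\<Sum>k\<in>{n+1-k2..n+1-k1}. P t (n+1-i, False) (k, True)) \<ge> (1-p)^(2*n) * (1 - (real t - 2) / (4 * w^2))"
    by (rule turn_right_mass) (use i k w t c1 c2 a1 in auto)
  then show ?thesis using e by simp
qed

end


subsection \<open>The stationary distribution\<close>

context chain begin

definition pi_chain :: "nat \<times> bool \<Rightarrow> real" where
  "pi_chain x = (if 1 \<le> fst x \<and> fst x \<le> n then (if fst x = 1 \<or> fst x = n then 1 / (4 * (real n - 1))
     else 1 / (2 * (real n - 1))) else 0)"

abbreviation "pi_mid \<equiv> 1 / (2 * (real n - 1))"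

lemma pi_chain_mid: assumes "2 \<le> i" "i \<le> n - 1" shows "pi_chain (i,b) = pi_mid"
proof -
  have "i \<noteq> 1" "i \<noteq> n" "1 \<le> i" "i \<le> n" using assms n3 by auto
  then show ?thesis by (simp add: pi_chain_def)
qed

lemma pi_chain_1: "pi_chain (1,b) = pi_mid/2" and pi_chain_n: "pi_chain (n,b) = pi_mid/2"
  using n3 by (simp_all add: pi_chain_def)

lemma pi_chain_nonneg: "pi_chain x \<ge> 0"
  using n3 by (simp add: pi_chain_def)

lemma pi_chain_outside: "x \<notin> S \<Longrightarrow> pi_chain x = 0"
  by (cases x) (auto simp: pi_chain_def mem_states)

lemma pi_chain_reflect: "x \<in> S \<Longrightarrow> pi_chain (reflect x) = pi_chain x"
  by (cases x) (auto simp: pi_chain_def reflect_def mem_states)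

lemma pi_chain_sum: "(\<Sum>x\<in>S. pi_chain x) = 1"
proof -
  have "(\<Sum>x\<in>S. pi_chain x) = (\<Sum>i\<in>{1..n}. \<Sum>b\<in>UNIV. pi_chain (i,b))"
    unfolding states_def by (simp add: sum.cartesian_product)
  also have "\<dots> = (\<Sum>i\<in>{1..n}. 2 * pi_chain (i,False))"
    by (intro sum.cong refl) (simp add: UNIV_bool pi_chain_def)
  also have "{1..n} = insert 1 (insert n {2..n-1})" using n3 by auto
  also have "(\<Sum>i\<in>insert 1 (insert n {2..n-1}). 2 * pi_chain (i,False))
             = 2 * (pi_mid/2) + 2 * (pi_mid/2) + (\<Sum>i\<in>{2..n-1}. 2 * pi_mid)"
    using n3 pi_chain_1[simplified] by (simp add: pi_chain_n pi_chain_mid)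
  also have "\<dots> = 1"
  proof -
    have "real (card {2..n-1}) = real n - 2" "real n - 1 \<noteq> 0" using n3 by (simp_all add: of_nat_diff)
    then show ?thesis by (simp add: divide_simps) (simp add: algebra_simps)
  qed
  finally show ?thesis .
qed

lemma K_supp:
  assumes x: "x \<in> S" and nz: "K x y \<noteq> 0"
  shows "(\<exists>i. x = (i,False) \<and> 2 \<le> i \<and> i \<le> n - 1 \<and> (y = (i,False) \<or> y = (i+1,False) \<or> y = (i+1,True)))
       \<or> (\<exists>i. x = (i,True) \<and> 2 \<le> i \<and> i \<le> n - 1 \<and> (y = (i,True) \<or> y = (i-1,True) \<or> y = (i-1,False)))
       \<or> (x = (1,False) \<and> (y = (2,False) \<or> y = (2,True)))
       \<or> (x = (1,True) \<and> (y = (1,False) \<or> y = (1,True)))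
       \<or> (x = (n,False) \<and> (y = (n,True) \<or> y = (n,False)))
       \<or> (x = (n,True) \<and> (y = (n-1,True) \<or> y = (n-1,False)))"
  using x n3
proof (cases rule: state_cases)
  case (um i) then show ?thesis using nz K_fwd_mid[OF um(2,3) n3, of U y] by (auto split: if_splits)
next
  case (dm i) then show ?thesis using nz K_bwd_mid[OF dm(2,3) n3, of U y] by (auto split: if_splits)
next
  case u1 then show ?thesis using nz K_fwd_1[OF n3, of U y] by (auto split: if_splits)
next
  case d1 then show ?thesis using nz K_bwd_1[OF n3, of U y] by (auto split: if_splits)
next
  case un then show ?thesis using nz K_fwd_n[OF n3, of U y] by (auto split: if_splits)
next
  case dn then show ?thesis using nz K_bwd_n[OF n3, of U y] by (auto split: if_splits)
qed

lemma sum_predecessors: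
  assumes "A \<subseteq> S" "\<And>x. x \<in> S \<Longrightarrow> K x y \<noteq> 0 \<Longrightarrow> x \<in> A"
  shows "(\<Sum>x\<in>S. f x * K x y) = (\<Sum>x\<in>A. f x * K x y)"
  by (rule sum.mono_neutral_right) (use assms finite_states in auto)

lemma pi_chain_balance_fwd:
  assumes j: "1 \<le> j" "j \<le> n"
  shows "(\<Sum>x\<in>S. pi_chain x * K x (j,False)) = pi_chain (j,False)"
proof -
  consider "j = 1" | "j = n" | "2 \<le> j" "j \<le> n - 1" using j by linarith
  then show ?thesis
  proof cases
    case 1
    let ?A = "{(1,True),(2,True)}"
    have pred: "x \<in> ?A" if "x \<in> S" "K x (j,False) \<noteq> 0" for x
      using K_supp[OF that] 1 n3 by auto
    have "(\<Sum>x\<in>S. pi_chain x * K x (j,False)) = (\<Sum>x\<in>?A. pi_chain x * K x (j,False))"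
      by (rule sum_predecessors) (use pred 1 n3 in \<open>auto simp: mem_states\<close>)
    also have "\<dots> = pi_mid/2 * (1-p) + pi_mid * (p/2)"
      using 1 n3 K_bwd_flip[of 2] pi_chain_1[simplified] K_bwd1_turn[simplified] by (simp add: pi_chain_mid)
    also have "\<dots> = pi_mid/2" by (simp add: right_diff_distrib)
    also have "\<dots> = pi_chain (j,False)" using 1 pi_chain_1[simplified] by simp
    finally show ?thesis .
  next
    case 2
    let ?A = "{(n,False),(n-1,False)}"
    have step: "K (n-1,False) (n,False) = (1-p)/2" using K_fwd_step[of "n-1"] n3 by simp
    have pred: "x \<in> ?A" if "x \<in> S" "K x (j,False) \<noteq> 0" for x
      using K_supp[OF that] 2 n3 by auto
    have "(\<Sum>x\<in>S. pi_chain x * K x (j,False)) = (\<Sum>x\<in>?A. pi_chain x * K x (j,False))"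
      by (rule sum_predecessors) (use pred 2 n3 in \<open>auto simp: mem_states\<close>)
    also have "\<dots> = pi_chain (n,False) * K (n,False) (n,False) + pi_chain (n-1,False) * K (n-1,False) (n,False)"
      using 2 n3 by simp
    also have "\<dots> = pi_mid/2 * p + pi_mid * ((1-p)/2)"
      unfolding step K_fwdn_stay pi_chain_n using n3 by (simp add: pi_chain_mid)
    also have "\<dots> = pi_mid/2" by (simp add: diff_divide_distrib right_diff_distrib)
    also have "\<dots> = pi_chain (j,False)" using 2 by (simp add: pi_chain_n)
    finally show ?thesis .
  next
    case 3
    have mix: "a/2 + a * (1-q)/2 + a * q/2 = a" for a q :: real by (simp add: field_simps)
    let ?A = "{(j,False),(j-1,False),(j+1,True)}"
    have pred: "x \<in> ?A" if "x \<in> S" "K x (j,False) \<noteq> 0" for x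
      using K_supp[OF that] 3 by auto
    have "(\<Sum>x\<in>S. pi_chain x * K x (j,False)) = (\<Sum>x\<in>?A. pi_chain x * K x (j,False))"
      by (rule sum_predecessors) (use pred 3 in \<open>auto simp: mem_states\<close>)
    also have "\<dots> = pi_mid/2 + pi_chain (j-1,False) * K (j-1,False) (j,False) + pi_chain (j+1,True) * K (j+1,True) (j,False)"
      using 3 by (simp add: pi_chain_mid K_fwd_stay)
    also have "pi_chain (j-1,False) * K (j-1,False) (j,False) = pi_mid * (1-p)/2"
    proof (cases "j = 2")
      case True then show ?thesis using pi_chain_1[simplified] K_fwd1_step[simplified] by simp
    next
      case False
      have "K (j-1,False) (j-1+1,False) = (1-p)/2" using 3 False by (intro K_fwd_step) auto
      then have k: "K (j-1,False) (j,False) = (1-p)/2" using 3 by simp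
      have pi: "pi_chain (j-1,False) = pi_mid" using 3 False by (intro pi_chain_mid) auto
      show ?thesis unfolding k pi by simp
    qed
    also have "pi_chain (j+1,True) * K (j+1,True) (j,False) = pi_mid * p/2"
    proof (cases "j + 1 = n")
      case True
      then have jn: "j + 1 = n" "j = n - 1" by simp_all
      show ?thesis unfolding jn(1) unfolding jn(2) pi_chain_n K_bwdn_flip by simp
    next
      case False
      have "K (j+1,True) (j+1-1,False) = p/2" using 3 False by (intro K_bwd_flip) auto
      then have k: "K (j+1,True) (j,False) = p/2" by simp
      have pi: "pi_chain (j+1,True) = pi_mid" using 3 False by (intro pi_chain_mid) auto
      show ?thesis unfolding k pi by simp
    qed
    also have "pi_mid/2 + pi_mid * (1-p)/2 + pi_mid * p/2 = pi_mid"
      by (rule mix)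
    also have "\<dots> = pi_chain (j,False)" using 3 by (simp add: pi_chain_mid)
    finally show ?thesis .
  qed
qed

text \<open>Balance at the backward states follows by the reflection symmetry.\<close>

lemma pi_chain_balance: assumes y: "y \<in> S" shows "(\<Sum>x\<in>S. pi_chain x * K x y) = pi_chain y"
proof (cases "snd y")
  case False
  then show ?thesis using y pi_chain_balance_fwd[of "fst y"] by (cases y) (auto simp: mem_states)
next
  case True
  obtain k where yk: "y = (k, True)" using True by (cases y) auto
  define y' where "y' = (n + 1 - k, False)"
  have y': "y' \<in> S" "reflect y' = y" "\<not> snd y'"
    using y yk by (auto simp: y'_def reflect_def mem_states)
  have "(\<Sum>x\<in>S. pi_chain x * K x y) = (\<Sum>x\<in>S. pi_chain (reflect x) * K (reflect x) y)"
    by (rule sum.reindex_bij_witness[where i = reflect and j = reflect]) (auto simp: reflect_states reflect_reflect)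
  also have "\<dots> = (\<Sum>x\<in>S. pi_chain x * K x y')"
    using y' by (intro sum.cong refl) (metis K_reflect pi_chain_reflect)
  also have "\<dots> = pi_chain y'"
    using y' pi_chain_balance_fwd[of "fst y'"] by (cases y') (auto simp: mem_states)
  also have "\<dots> = pi_chain y" using y' pi_chain_reflect by metis
  finally show ?thesis .
qed

lemma pi_chain_stationary: "stationary pi_chain"
  unfolding stationary_def using pi_chain_nonneg pi_chain_outside pi_chain_sum pi_chain_balance by auto

end


subsection \<open>Doeblin's condition for small n\<close>

context stochastic_kernel begin

lemma P_path_ge:
  assumes "P a x w \<ge> r^a" "P b w z \<ge> r^b" "w \<in> S" "z \<in> S" "r \<ge> 0"
  shows "P (a + b) x z \<ge> r^(a+b)"
proof -
  have "r^(a+b) = r^a * r^b" by (simp add: power_add)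
  also have "\<dots> \<le> P a x w * P b w z" using assms by (intro mult_mono) (auto intro: P_nonneg)
  also have "\<dots> \<le> P (a + b) x z" by (rule P_ge_one[OF assms(3,4)])
  finally show ?thesis .
qed

end

context chain begin

lemma half_step_ge: "(x::real) \<le> 1/3 \<Longrightarrow> (1 - x) / 2 \<ge> 1/3" by (simp add: field_simps)

lemma P_one_step_ge: assumes "x \<in> S" "K x y \<ge> 1/3" shows "P 1 x y \<ge> (1/3)^1"
  using assms P_1 by simp

lemma fwd_run: "1 \<le> i \<Longrightarrow> i + m \<le> n \<Longrightarrow> P m (i,False) (i+m,False) \<ge> (1/3)^m"
proof (induction m)
  case 0 then show ?case by (simp add: P_0)
next
  case (Suc m)
  have K: "K (i+m,False) (i+m+1,False) \<ge> 1/3"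
  proof (cases "i + m = 1")
    case True
    then have e: "i + m + 1 = 2" by simp
    have "K (i+m,False) (i+m+1,False) = 1 - p" unfolding e unfolding True by (rule K_fwd1_step)
    then show ?thesis using p_le_third by linarith
  next
    case False
    have "K (i+m,False) (i+m+1,False) = (1-p)/2" by (rule K_fwd_step) (use Suc False in auto)
    then show ?thesis using half_step_ge[OF p_le_third] by linarith
  qed
  have "P (m + 1) (i,False) (i+m+1,False) \<ge> (1/3)^(m+1)"
    by (rule P_path_ge[OF Suc.IH P_one_step_ge]) (use Suc K in \<open>auto simp: mem_states\<close>)
  then show ?case by simp
qed

lemma bwd_run: "1 \<le> j \<Longrightarrow> j + m \<le> n \<Longrightarrow> P m (j+m,True) (j,True) \<ge> (1/3)^m"
proof (induction m arbitrary: j)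
  case 0 then show ?case by (simp add: P_0)
next
  case (Suc m)
  have K: "K (j+m+1,True) (j+m,True) \<ge> 1/3"
  proof (cases "j + m + 1 = n")
    case True
    then have e: "j + m = n - 1" by simp
    have "K (j+m+1,True) (j+m,True) = 1 - p" unfolding True unfolding e by (rule K_bwdn_step)
    then show ?thesis using p_le_third by linarith
  next
    case False
    have e: "j + m + 1 - 1 = j + m" by simp
    have "K (j+m+1,True) (j+m+1-1,True) = (1-p)/2" by (rule K_bwd_step) (use Suc False in auto)
    then show ?thesis unfolding e using half_step_ge[OF p_le_third] by linarith
  qed
  have "P (1 + m) (j+m+1,True) (j,True) \<ge> (1/3)^(1+m)"
    by (rule P_path_ge[OF P_one_step_ge Suc.IH]) (use Suc K in \<open>auto simp: mem_states\<close>)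
  then show ?case by (simp add: add.commute)
qed

lemma stay_at_2: "P m (2,False) (2,False) \<ge> (1/3)^m"
proof (induction m)
  case 0 then show ?case by (simp add: P_0)
next
  case (Suc m)
  have "K (2,False) (2,False) = 1/2" by (rule K_fwd_stay) (use n3 in auto)
  then have K: "K (2,False) (2,False) \<ge> 1/3" by simp
  have "P (m + 1) (2,False) (2,False) \<ge> (1/3)^(m+1)"
    by (rule P_path_ge[OF Suc.IH P_one_step_ge]) (use K n3 in \<open>auto simp: mem_states\<close>)
  then show ?case by simp
qed

text \<open>From any state, state 2 is reached in exactly 2n+2 steps along one path: forward to n,
  turn, back to 1, turn, step to 2, then wait at 2.\<close>

lemma reach_2: assumes x: "x \<in> S" shows "P (2*n+2) x (2,False) \<ge> (1/3)^(2*n+2)"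
proof -
  obtain i b where xi: "x = (i,b)" by (cases x)
  have i: "1 \<le> i" "i \<le> n" using x xi by (auto simp: mem_states)
  have S1: "(1,True) \<in> S" "(1,False) \<in> S" "(2,False) \<in> S" "(n,False) \<in> S" "(n,True) \<in> S" using n3 by (auto simp: mem_states)
  have k1: "K (1,True) (1,False) \<ge> 1/3" using K_bwd1_turn p_le_third by linarith
  have k2: "K (1,False) (2,False) \<ge> 1/3" using K_fwd1_step p_le_third by linarith
  have k3: "K (n,False) (n,True) \<ge> 1/3" using K_fwdn_turn p_le_third by linarith
  have to2: "P (1 + 1) (1,True) (2,False) \<ge> (1/3)^(1+1)"
    by (rule P_path_ge[where w="(1,False)", OF P_one_step_ge[OF _ k1] P_one_step_ge[OF _ k2]]) (use S1 in auto)
  show ?thesis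
  proof (cases b)
    case False
    have a1: "P (n - i) (i,False) (n,False) \<ge> (1/3)^(n-i)" using fwd_run[of i "n-i"] i by simp
    have a2: "P (n - i + 1) (i,False) (n,True) \<ge> (1/3)^(n-i+1)"
      by (rule P_path_ge[OF a1 P_one_step_ge[OF _ k3]]) (use S1 in auto)
    have a3: "P (n - 1) (n,True) (1,True) \<ge> (1/3)^(n-1)" using bwd_run[of 1 "n-1"] n3 by simp
    have a4: "P (n - i + 1 + (n - 1)) (i,False) (1,True) \<ge> (1/3)^(n - i + 1 + (n - 1))"
      by (rule P_path_ge[OF a2 a3]) (use S1 in auto)
    have a5: "P (n - i + 1 + (n - 1) + (1 + 1)) (i,False) (2,False) \<ge> (1/3)^(n - i + 1 + (n - 1) + (1 + 1))"
      by (rule P_path_ge[OF a4 to2]) (use S1 in auto)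
    have a6: "P (n - i + 1 + (n - 1) + (1 + 1) + i) (i,False) (2,False) \<ge> (1/3)^(n - i + 1 + (n - 1) + (1 + 1) + i)"
      by (rule P_path_ge[OF a5 stay_at_2]) (use S1 in auto)
    have e: "n - i + 1 + (n - 1) + (1 + 1) + i = 2*n+2" using i n3 by simp
    show ?thesis using a6 xi False unfolding e by simp
  next
    case True
    have a1: "P (i - 1) (i,True) (1,True) \<ge> (1/3)^(i-1)" using bwd_run[of 1 "i-1"] i by simp
    have a2: "P (i - 1 + (1 + 1)) (i,True) (2,False) \<ge> (1/3)^(i - 1 + (1 + 1))"
      by (rule P_path_ge[OF a1 to2]) (use S1 in auto)
    have a3: "P (i - 1 + (1 + 1) + (2*n+1-i)) (i,True) (2,False) \<ge> (1/3)^(i - 1 + (1 + 1) + (2*n+1-i))"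
      by (rule P_path_ge[OF a2 stay_at_2]) (use S1 in auto)
    have e: "i - 1 + (1 + 1) + (2*n+1-i) = 2*n+2" using i by simp
    show ?thesis using a3 xi True unfolding e by simp
  qed
qed

lemma doeblin_small: "doeblin (2*n+2) ((1/3)^(2*n+2)) (\<lambda>y. if y = (2,False) then 1 else 0)"
  unfolding doeblin_def
proof (intro conjI ballI)
  show "(0::real) < (1/3)^(2*n+2)" by simp
  show "\<And>y. 0 \<le> (if y = (2,False) then 1 else (0::real))" by simp
  have "(2,False) \<in> S" using n3 by (simp add: mem_states)
  then show "(\<Sum>y\<in>S. if y = (2,False) then 1 else (0::real)) = 1" by (simp add: finite_states)
  fix x y assume "x \<in> S" "y \<in> S"
  then show "(1/3)^(2*n+2) * (if y = (2,False) then 1 else 0) \<le> P (2*n+2) x y"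
    using reach_2 P_nonneg by auto
qed

end


subsection \<open>Doeblin's condition for large n\<close>

text \<open>For n \<ge> 5120 the state space is cut into blocks of length q = n div 40.  All routes end in the
  block A = forward states 4q..6q, passing through B = backward states 8q..10q or through
  M = states 19q..21q.  Each single stage has probability at least beta/n (a lane flip, which costs a
  factor p \<ge> 1/(cn)) or mass at least beta (a turn at an end), where beta depends on c only.\<close>

locale large_chain = chain +
  fixes c :: real
  assumes c1: "c \<ge> 1" and Ulo: "real n / c \<le> real U" and Uhi: "real U \<le> c * real n"
    and nbig: "n \<ge> 5120"
begin

definition q :: nat where "q = n div 40"
definition \<beta> :: real where "\<beta> = exp (-8*c) / (4*c)"

lemma q_facts: "real q \<ge> 128" "40 * real q \<le> real n" "real n \<le> 40 * real q + 39" "real q ^ 2 \<ge> 128 * real q"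
proof -
  have "40 * q \<le> n" "n < 40 * q + 40" unfolding q_def by auto
  moreover have "q \<ge> 128" using nbig unfolding q_def by auto
  ultimately show q: "real q \<ge> 128" "40 * real q \<le> real n" "real n \<le> 40 * real q + 39" by linarith+
  have "real q * real q \<ge> 128 * real q" using q by (intro mult_right_mono) auto
  then show "real q ^ 2 \<ge> 128 * real q" by (simp add: power2_eq_square)
qed

lemma beta_pos: "\<beta> > 0" using c1 by (simp add: \<beta>_def)
lemma beta_le: "\<beta> \<le> 1"
proof -
  have "exp (-8*c) \<le> 1" using c1 by simp
  then have "exp (-8*c) \<le> 4*c" using c1 by linarith
  then show ?thesis using c1 unfolding \<beta>_def by (simp add: pos_divide_le_eq)
qed

lemma p_times_n_le: "p * real n \<le> c" and p_ge: "p \<ge> 1 / (c * real n)"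
proof -
  have Upos: "real U > 0" using U3 by simp
  have "real n \<le> c * real U" using Ulo c1 by (simp add: field_simps)
  then show "p * real n \<le> c" using Upos by (simp add: field_simps)
  show "p \<ge> 1 / (c * real n)" using Uhi Upos c1 n3 by (simp add: field_simps)
qed

lemma pow_bound: assumes "t \<le> m * n" shows "(1-p)^t \<ge> exp (-2 * real m * c)"
proof -
  have "exp (-2 * real m * c) \<le> exp (-2 * p * real t)"
  proof -
    have "p * real t \<le> p * (real m * real n)" using assms p_range by (intro mult_left_mono) (auto simp: of_nat_mult[symmetric] simp del: of_nat_mult)
    also have "\<dots> = real m * (p * real n)" by simp
    also have "\<dots> \<le> real m * c" using p_times_n_le by (intro mult_left_mono) auto
    finally show ?thesis by simp
  qed
  also have "\<dots> = exp (-2 * p) ^ t" by (simp add: exp_of_nat_mult[symmetric] mult_ac)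
  also have "\<dots> \<le> (1-p)^t" using p_range p_le_third by (intro power_mono exp_le_one_minus) auto
  finally show ?thesis .
qed

lemma stage_bound:
  assumes "t \<le> 4 * n" "real t \<le> real q ^ 2"
  shows "p * (1-p)^t * (1/2 - real t / (4 * real q ^ 2)) \<ge> \<beta> / real n"
proof -
  have q0: "real q > 0" using q_facts by simp
  have a: "1/2 - real t / (4 * real q ^ 2) \<ge> 1/4" using assms(2) q0 by (simp add: field_simps)
  have b: "(1-p)^t \<ge> exp (-8*c)" using pow_bound[of t 4] assms(1) by simp
  have "\<beta> / real n = (1 / (c * real n)) * exp (-8*c) * (1/4)" unfolding \<beta>_def using n3 c1 by (simp add: field_simps)
  also have "\<dots> \<le> p * (1-p)^t * (1/2 - real t / (4 * real q ^ 2))"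
    using p_ge b a c1 n3 p_range by (intro mult_mono) (auto intro: mult_nonneg_nonneg)
  finally show ?thesis .
qed

lemma cross_bound:
  assumes "t \<ge> 2" "real t \<le> real q ^ 2"
  shows "(1-p)^(2*n) * (1 - (real t - 2) / (4 * real q ^ 2)) \<ge> \<beta>"
proof -
  have q0: "real q > 0" using q_facts by simp
  have "real q ^ 2 \<ge> 0" by simp
  then have h: "real t - 2 \<le> 3 * real q ^ 2" using assms(2) by linarith
  have "(real t - 2) / (4 * real q ^ 2) \<le> 3/4" using h q0 by (simp add: divide_le_eq)
  then have a: "1 - (real t - 2) / (4 * real q ^ 2) \<ge> 1/4" by simp
  have b: "(1-p)^(2*n) \<ge> exp (-4*c)" using pow_bound[of "2*n" 2] by simp
  have "\<beta> \<le> exp (-4*c) * (1/4)"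
  proof -
    have "exp (-8*c) \<le> exp (-4*c)" using c1 by simp
    have "exp (-8*c) / (4*c) \<le> exp (-8*c) / 4" using c1 by (intro divide_left_mono) auto
    then show ?thesis unfolding \<beta>_def using \<open>exp (-8*c) \<le> exp (-4*c)\<close> by linarith
  qed
  also have "\<dots> \<le> (1-p)^(2*n) * (1 - (real t - 2) / (4 * real q ^ 2))"
    using a b by (intro mult_mono) auto
  finally show ?thesis .
qed


lemma flip_A_to_B: assumes "4*q \<le> i" "i \<le> 6*q" "8*q \<le> j" "j \<le> 10*q" "14*q+4 \<le> t" "t \<le> 126*q - 4"
  shows "P t (i,False) (j,True) \<ge> \<beta> / real n"
proof -
  have "P t (i,False) (j,True) \<ge> p * (1-p)^t * (1/2 - real t / (4 * real q^2))"
    by (rule flip_fwd_to_bwd) (use assms q_facts in linarith)+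
  moreover have "p * (1-p)^t * (1/2 - real t / (4 * real q ^ 2)) \<ge> \<beta> / real n"
    by (rule stage_bound) (use assms q_facts in linarith)+
  ultimately show ?thesis by linarith
qed

lemma flip_B_to_A: assumes "8*q \<le> i" "i \<le> 10*q" "4*q \<le> j" "j \<le> 6*q" "14*q+4 \<le> t" "t \<le> 22*q - 8"
  shows "P t (i,True) (j,False) \<ge> \<beta> / real n"
proof -
  have "P t (i,True) (j,False) \<ge> p * (1-p)^t * (1/2 - real t / (4 * real q^2))"
    by (rule flip_bwd_to_fwd) (use assms q_facts in linarith)+
  moreover have "p * (1-p)^t * (1/2 - real t / (4 * real q ^ 2)) \<ge> \<beta> / real n"
    by (rule stage_bound) (use assms q_facts in linarith)+
  ultimately show ?thesis by linarith
qed

lemma flip_left_to_B: assumes "2 \<le> i" "i \<le> 32*q" "8*q \<le> j" "j \<le> 10*q"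
  shows "P (60*q) (i,False) (j,True) \<ge> \<beta> / real n"
proof -
  have "P (60*q) (i,False) (j,True) \<ge> p * (1-p)^(60*q) * (1/2 - real (60*q) / (4 * real q^2))"
    by (rule flip_fwd_to_bwd) (use assms q_facts in linarith)+
  moreover have "p * (1-p)^(60*q) * (1/2 - real (60*q) / (4 * real q ^ 2)) \<ge> \<beta> / real n"
    by (rule stage_bound) (use assms q_facts in linarith)+
  ultimately show ?thesis by linarith
qed

lemma turn_right_to_M: assumes "32*q < i" "i \<le> n - 1"
  shows "(\<Sum>k\<in>{19*q..21*q}. P (4*n - 2*i - 40*q) (i,False) (k,True)) \<ge> \<beta>"
proof -
  let ?t = "4*n - 2*i - 40*q"
  have "(\<Sum>k\<in>{19*q..21*q}. P ?t (i,False) (k,True)) \<ge> (1-p)^(2*n) * (1 - (real ?t - 2) / (4 * real q^2))"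
  proof (rule turn_right_mass)
    have e1: "real (2 * n - i - 21 * q - 1) = 2 * real n - real i - 21 * real q - 1" using assms q_facts by linarith
    have e2: "real (2 * n - i - 19 * q - 1) = 2 * real n - real i - 19 * real q - 1" using assms q_facts by linarith
    have e3: "real (4 * n - 2 * i - 40 * q) = 4 * real n - 2 * real i - 40 * real q" using assms q_facts by linarith
    show "real (2 * n - i - 21 * q - 1) \<le> (real (4 * n - 2 * i - 40 * q) - 2) / 2 - real q"
      unfolding e1 e3 by (simp add: field_simps)
    show "(real (4 * n - 2 * i - 40 * q) - 2) / 2 + real q \<le> real (2 * n - i - 19 * q - 1)"
      unfolding e2 e3 by (simp add: field_simps)
  qed (use assms q_facts in linarith)+
  moreover have "(1-p)^(2*n) * (1 - (real ?t - 2) / (4 * real q^2)) \<ge> \<beta>"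
    by (rule cross_bound) (use assms q_facts in linarith)+
  ultimately show ?thesis by linarith
qed

lemma flip_M_to_A: assumes "19*q \<le> i" "i \<le> 21*q" "4*q \<le> j" "j \<le> 6*q"
  shows "P (40*q) (i,True) (j,False) \<ge> \<beta> / real n"
proof -
  have "P (40*q) (i,True) (j,False) \<ge> p * (1-p)^(40*q) * (1/2 - real (40*q) / (4 * real q^2))"
    by (rule flip_bwd_to_fwd) (use assms q_facts in linarith)+
  moreover have "p * (1-p)^(40*q) * (1/2 - real (40*q) / (4 * real q ^ 2)) \<ge> \<beta> / real n"
    by (rule stage_bound) (use assms q_facts in linarith)+
  ultimately show ?thesis by linarith
qed

lemma flip_bwd_to_A: assumes "12*q \<le> i" "i \<le> n - 1" "4*q \<le> j" "j \<le> 6*q"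
  shows "P (2*i) (i,True) (j,False) \<ge> \<beta> / real n"
proof -
  have "P (2*i) (i,True) (j,False) \<ge> p * (1-p)^(2*i) * (1/2 - real (2*i) / (4 * real q^2))"
    by (rule flip_bwd_to_fwd) (use assms q_facts in linarith)+
  moreover have "p * (1-p)^(2*i) * (1/2 - real (2*i) / (4 * real q ^ 2)) \<ge> \<beta> / real n"
    by (rule stage_bound) (use assms q_facts in linarith)+
  ultimately show ?thesis by linarith
qed

lemma turn_left_to_M: assumes "2 \<le> i" "i < 12*q"
  shows "(\<Sum>k\<in>{19*q..21*q}. P (2*i + 40*q - 4) (i,True) (k,False)) \<ge> \<beta>"
proof -
  let ?t = "2*i + 40*q - 4"
  have "(\<Sum>k\<in>{19*q..21*q}. P ?t (i,True) (k,False)) \<ge> (1-p)^(2*n) * (1 - (real ?t - 2) / (4 * real q^2))"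
  proof (rule turn_left_mass)
    have e1: "real (i + 19 * q - 3) = real i + 19 * real q - 3" using assms q_facts by linarith
    have e2: "real (i + 21 * q - 3) = real i + 21 * real q - 3" using assms q_facts by linarith
    have e3: "real (2 * i + 40 * q - 4) = 2 * real i + 40 * real q - 4" using assms q_facts by linarith
    show "real (i + 19 * q - 3) \<le> (real (2 * i + 40 * q - 4) - 2) / 2 - real q"
      unfolding e1 e3 by (simp add: field_simps)
    show "(real (2 * i + 40 * q - 4) - 2) / 2 + real q \<le> real (i + 21 * q - 3)"
      unfolding e2 e3 by (simp add: field_simps)
  qed (use assms q_facts in linarith)+
  moreover have "(1-p)^(2*n) * (1 - (real ?t - 2) / (4 * real q^2)) \<ge> \<beta>"
    by (rule cross_bound) (use assms q_facts in linarith)+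
  ultimately show ?thesis by linarith
qed

lemma flip_M_to_B: assumes "19*q \<le> i" "i \<le> 21*q" "8*q \<le> j" "j \<le> 10*q"
  shows "P (40*q) (i,False) (j,True) \<ge> \<beta> / real n"
proof -
  have "P (40*q) (i,False) (j,True) \<ge> p * (1-p)^(40*q) * (1/2 - real (40*q) / (4 * real q^2))"
    by (rule flip_fwd_to_bwd) (use assms q_facts in linarith)+
  moreover have "p * (1-p)^(40*q) * (1/2 - real (40*q) / (4 * real q ^ 2)) \<ge> \<beta> / real n"
    by (rule stage_bound) (use assms q_facts in linarith)+
  ultimately show ?thesis by linarith
qed


definition hop_lb :: real where "hop_lb = \<beta> / real n"

lemma hop_lb_nonneg: "hop_lb \<ge> 0" using beta_pos by (simp add: hop_lb_def)

text \<open>From A back to A within a range of times: flip to B and back, summed over the 2q+1 states of B.\<close>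

lemma A_to_A:
  assumes "4*q \<le> i" "i \<le> 6*q" "4*q \<le> i'" "i' \<le> 6*q" "29*q+4 \<le> L" "L \<le> 141*q - 4"
  shows "P L (i,False) (i',False) \<ge> real (2*q+1) * (hop_lb * hop_lb)"
proof -
  have L: "L = (L - 15*q) + 15*q" using assms by simp
  have "P ((L - 15*q) + 15*q) (i,False) (i',False) \<ge> (\<Sum>j\<in>{8*q..10*q}. P (L - 15*q) (i,False) (j,True) * P (15*q) (j,True) (i',False))"
    using assms q_facts by (intro P_ge_sum_lane) (auto simp: mem_states)
  moreover have "(\<Sum>j\<in>{8*q..10*q}. P (L - 15*q) (i,False) (j,True) * P (15*q) (j,True) (i',False)) \<ge> real (10*q + 1 - 8*q) * (hop_lb * hop_lb)"
    by (rule sum_prod_ge_uniform[OF _ _ hop_lb_nonneg hop_lb_nonneg]) (use assms q_facts in \<open>auto simp: hop_lb_def intro!: flip_A_to_B flip_B_to_A\<close>)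
  moreover have "10*q + 1 - 8*q = 2*q+1" by simp
  ultimately show ?thesis using L by simp
qed

lemma reach_A_fwd_left: assumes "2 \<le> i" "i \<le> 32*q" "4*q \<le> j" "j \<le> 6*q"
  shows "P (60*q + 18*q) (i,False) (j,False) \<ge> real (2*q+1) * (hop_lb * hop_lb)"
proof -
  have "P (60*q + 18*q) (i,False) (j,False) \<ge> (\<Sum>k\<in>{8*q..10*q}. P (60*q) (i,False) (k,True) * P (18*q) (k,True) (j,False))"
    using assms q_facts by (intro P_ge_sum_lane) (auto simp: mem_states)
  moreover have "(\<Sum>k\<in>{8*q..10*q}. P (60*q) (i,False) (k,True) * P (18*q) (k,True) (j,False)) \<ge> real (10*q + 1 - 8*q) * (hop_lb * hop_lb)"
    by (rule sum_prod_ge_uniform[OF _ _ hop_lb_nonneg hop_lb_nonneg]) (use assms q_facts in \<open>auto simp: hop_lb_def intro!: flip_left_to_B flip_B_to_A\<close>)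
  moreover have "10*q + 1 - 8*q = 2*q+1" by simp
  ultimately show ?thesis by simp
qed

lemma reach_A_fwd_right: assumes "32*q < i" "i \<le> n - 1" "4*q \<le> j" "j \<le> 6*q"
  shows "P ((4*n - 2*i - 40*q) + 40*q) (i,False) (j,False) \<ge> \<beta> * hop_lb"
proof -
  have "P ((4*n - 2*i - 40*q) + 40*q) (i,False) (j,False) \<ge> (\<Sum>k\<in>{19*q..21*q}. P (4*n - 2*i - 40*q) (i,False) (k,True) * P (40*q) (k,True) (j,False))"
    using assms q_facts by (intro P_ge_sum_lane) (auto simp: mem_states)
  moreover have "(\<Sum>k\<in>{19*q..21*q}. P (4*n - 2*i - 40*q) (i,False) (k,True) * P (40*q) (k,True) (j,False)) \<ge> \<beta> * hop_lb"
    by (rule sum_prod_ge_mass[OF turn_right_to_M _ hop_lb_nonneg P_nonneg]) (use assms q_facts in \<open>auto simp: hop_lb_def intro!: flip_M_to_A\<close>)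
  ultimately show ?thesis by simp
qed

lemma reach_A_bwd_right: assumes "12*q \<le> i" "i \<le> n - 1" "4*q \<le> j" "j \<le> 6*q"
  shows "P (2*i) (i,True) (j,False) \<ge> hop_lb"
  using flip_bwd_to_A[OF assms] by (simp add: hop_lb_def)

lemma M_to_A: assumes "19*q \<le> k" "k \<le> 21*q" "4*q \<le> j" "j \<le> 6*q"
  shows "P (40*q + 18*q) (k,False) (j,False) \<ge> real (2*q+1) * (hop_lb * hop_lb)"
proof -
  have "P (40*q + 18*q) (k,False) (j,False) \<ge> (\<Sum>m\<in>{8*q..10*q}. P (40*q) (k,False) (m,True) * P (18*q) (m,True) (j,False))"
    using assms q_facts by (intro P_ge_sum_lane) (auto simp: mem_states)
  moreover have "(\<Sum>m\<in>{8*q..10*q}. P (40*q) (k,False) (m,True) * P (18*q) (m,True) (j,False)) \<ge> real (10*q + 1 - 8*q) * (hop_lb * hop_lb)"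
    by (rule sum_prod_ge_uniform[OF _ _ hop_lb_nonneg hop_lb_nonneg]) (use assms q_facts in \<open>auto simp: hop_lb_def intro!: flip_M_to_B flip_B_to_A\<close>)
  moreover have "10*q + 1 - 8*q = 2*q+1" by simp
  ultimately show ?thesis by simp
qed

lemma reach_A_bwd_left: assumes "2 \<le> i" "i < 12*q" "4*q \<le> j" "j \<le> 6*q"
  shows "P ((2*i + 40*q - 4) + (40*q + 18*q)) (i,True) (j,False) \<ge> \<beta> * (real (2*q+1) * (hop_lb * hop_lb))"
proof -
  have "P ((2*i + 40*q - 4) + (40*q + 18*q)) (i,True) (j,False) \<ge> (\<Sum>k\<in>{19*q..21*q}. P (2*i + 40*q - 4) (i,True) (k,False) * P (40*q + 18*q) (k,False) (j,False))"
    using assms q_facts by (intro P_ge_sum_lane) (auto simp: mem_states)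
  moreover have "(\<Sum>k\<in>{19*q..21*q}. P (2*i + 40*q - 4) (i,True) (k,False) * P (40*q + 18*q) (k,False) (j,False)) \<ge> \<beta> * (real (2*q+1) * (hop_lb * hop_lb))"
    by (rule sum_prod_ge_mass[OF turn_left_to_M[OF assms(1,2)] _ _ P_nonneg]) (use M_to_A assms hop_lb_nonneg in auto)
  ultimately show ?thesis by simp
qed


text \<open>rho/n is the common lower bound for reaching A from any state.\<close>

definition rho :: real where "rho = \<beta>^3 / 90"

lemma block_size_ge: "real (2*q+1) \<ge> real n / 40" using q_facts by simp

lemma two_hops_ge: "real (2*q+1) * (hop_lb * hop_lb) \<ge> \<beta>^2 / (40 * real n)"
proof -
  have np: "real n > 0" using n3 by simp
  have "\<beta>^2 / (40 * real n) = (real n / 40) * (hop_lb * hop_lb)" unfolding hop_lb_def using np by (simp add: field_simps power2_eq_square)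
  also have "\<dots> \<le> real (2*q+1) * (hop_lb * hop_lb)" using block_size_ge by (intro mult_right_mono) auto
  finally show ?thesis .
qed

lemma beta_powers: "\<beta>^3 \<le> \<beta>^2" "\<beta>^2 \<le> \<beta>" "0 < \<beta>"
  using beta_pos beta_le by (auto simp: power2_eq_square power3_eq_cube mult_le_cancel_right1 mult_le_cancel_left1 mult_left_le_one_le)

lemma rho_bounds: "rho \<le> \<beta>^2/90" "rho \<le> \<beta>^3/40" "\<beta>^2 \<ge> 0" "rho \<ge> 0"
proof -
  have "\<beta>^2 \<ge> 0" "\<beta>^3 \<ge> 0" using beta_pos by auto
  then show "rho \<le> \<beta>^2/90" "rho \<le> \<beta>^3/40" "\<beta>^2 \<ge> 0" "rho \<ge> 0" unfolding rho_def using beta_powers by linarith+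
qed

lemma one_minus_p_ge: "1 - p \<ge> 2/3" using p_le_third by simp

lemma rho_below:
  shows rho_le_two_hops: "rho / real n \<le> real (2*q+1) * (hop_lb * hop_lb)"
    and rho_le_hop: "rho / real n \<le> hop_lb"
    and rho_le_beta_hop: "rho / real n \<le> \<beta> * hop_lb"
    and rho_le_beta_two_hops: "rho / real n \<le> \<beta> * (real (2*q+1) * (hop_lb * hop_lb))"
    and rho_le_turn_two_hops: "rho / real n \<le> (1-p) * ((1-p) * (real (2*q+1) * (hop_lb * hop_lb)))"
    and rho_le_step_two_hops: "rho / real n \<le> (1-p) * (real (2*q+1) * (hop_lb * hop_lb))"
    and rho_le_step_hop: "rho / real n \<le> (1-p) * hop_lb"
    and rho_le_turn_hop: "rho / real n \<le> (1-p) * ((1-p) * hop_lb)"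
proof -
  have np: "real n > 0" using n3 by simp
  have div_mono: "a \<le> b \<Longrightarrow> a / real n \<le> b / real n" for a b by (simp add: divide_right_mono)
  have "rho / real n \<le> (\<beta>^2 / 40) / real n" by (rule div_mono) (use rho_bounds in linarith)
  then show "rho / real n \<le> real (2*q+1) * (hop_lb * hop_lb)" using two_hops_ge by simp
  show "rho / real n \<le> hop_lb" unfolding hop_lb_def by (rule div_mono) (use rho_bounds beta_powers in linarith)
  have "rho / real n \<le> \<beta>^2 / real n" by (rule div_mono) (use rho_bounds in linarith)
  then show "rho / real n \<le> \<beta> * hop_lb" unfolding hop_lb_def by (simp add: power2_eq_square)
  have "rho / real n \<le> (\<beta>^3 / 40) / real n" by (rule div_mono) (use rho_bounds in linarith)
  then have "rho / real n \<le> \<beta> * (\<beta>^2 / (40 * real n))" by (simp add: power2_eq_square power3_eq_cube)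
  also have "\<dots> \<le> \<beta> * (real (2*q+1) * (hop_lb * hop_lb))"
    using two_hops_ge beta_powers by (intro mult_left_mono) auto
  finally show "rho / real n \<le> \<beta> * (real (2*q+1) * (hop_lb * hop_lb))" .
  have "rho / real n \<le> (\<beta>^2 / 90) / real n" by (rule div_mono) (use rho_bounds in linarith)
  then have "rho / real n \<le> (2/3) * ((2/3) * (\<beta>^2 / (40 * real n)))" by simp
  also have "\<dots> \<le> (1-p) * ((1-p) * (real (2*q+1) * (hop_lb * hop_lb)))"
    using two_hops_ge one_minus_p_ge beta_powers np
    by (intro mult_mono) (auto intro: mult_nonneg_nonneg hop_lb_nonneg)
  finally show "rho / real n \<le> (1-p) * ((1-p) * (real (2*q+1) * (hop_lb * hop_lb)))" .
  have "rho / real n \<le> (\<beta>^2 / 60) / real n" by (rule div_mono) (use rho_bounds in linarith)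
  then have "rho / real n \<le> (2/3) * (\<beta>^2 / (40 * real n))" by simp
  also have "\<dots> \<le> (1-p) * (real (2*q+1) * (hop_lb * hop_lb))"
    using two_hops_ge one_minus_p_ge beta_powers np by (intro mult_mono) auto
  finally show "rho / real n \<le> (1-p) * (real (2*q+1) * (hop_lb * hop_lb))" .
  have "rho / real n \<le> ((2/3) * \<beta>) / real n" by (rule div_mono) (use rho_bounds beta_powers in linarith)
  then have "rho / real n \<le> (2/3) * hop_lb" unfolding hop_lb_def by simp
  also have "\<dots> \<le> (1-p) * hop_lb" using one_minus_p_ge hop_lb_nonneg by (intro mult_right_mono) auto
  finally show "rho / real n \<le> (1-p) * hop_lb" .
  have "rho / real n \<le> ((4/9) * \<beta>) / real n" by (rule div_mono) (use rho_bounds beta_powers in linarith)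
  then have "rho / real n \<le> (2/3) * ((2/3) * hop_lb)" unfolding hop_lb_def by simp
  also have "\<dots> \<le> (1-p) * ((1-p) * hop_lb)" using one_minus_p_ge hop_lb_nonneg by (intro mult_mono) auto
  finally show "rho / real n \<le> (1-p) * ((1-p) * hop_lb)" .
qed

text \<open>The four end states reach A through their neighbours.\<close>

lemma fwd_1_to_A: assumes "4*q \<le> j" "j \<le> 6*q"
  shows "P (1 + (60*q + 18*q)) (1,False) (j,False) \<ge> (1-p) * (real (2*q+1) * (hop_lb * hop_lb))"
proof -
  have "P (1 + (60*q + 18*q)) (1,False) (j,False) \<ge> K (1,False) (2,False) * P (60*q + 18*q) (2,False) (j,False)"
    by (rule P_first_step_ge) (use assms n3 q_facts in \<open>auto simp: mem_states\<close>)
  moreover have "P (60*q + 18*q) (2,False) (j,False) \<ge> real (2*q+1) * (hop_lb * hop_lb)"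
    by (rule reach_A_fwd_left) (use assms q_facts in linarith)+
  ultimately show ?thesis unfolding K_fwd1_step using p_range by (meson mult_left_mono order.trans)
qed

lemma bwd_1_to_A: assumes "4*q \<le> j" "j \<le> 6*q"
  shows "P (1 + (1 + (60*q + 18*q))) (1,True) (j,False) \<ge> (1-p) * ((1-p) * (real (2*q+1) * (hop_lb * hop_lb)))"
proof -
  have "P (1 + (1 + (60*q + 18*q))) (1,True) (j,False) \<ge> K (1,True) (1,False) * P (1 + (60*q + 18*q)) (1,False) (j,False)"
    by (rule P_first_step_ge) (use assms n3 q_facts in \<open>auto simp: mem_states\<close>)
  then show ?thesis unfolding K_bwd1_turn using fwd_1_to_A[OF assms] p_range by (meson mult_left_mono order.trans)
qed

lemma bwd_n_to_A: assumes "4*q \<le> j" "j \<le> 6*q"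
  shows "P (1 + 2*(n-1)) (n,True) (j,False) \<ge> (1-p) * hop_lb"
proof -
  have "P (1 + 2*(n-1)) (n,True) (j,False) \<ge> K (n,True) (n-1,True) * P (2*(n-1)) (n-1,True) (j,False)"
    by (rule P_first_step_ge) (use assms n3 q_facts in \<open>auto simp: mem_states\<close>)
  moreover have "P (2*(n-1)) (n-1,True) (j,False) \<ge> hop_lb"
    by (rule reach_A_bwd_right) (use assms q_facts in linarith)+
  ultimately show ?thesis unfolding K_bwdn_step using p_range by (meson mult_left_mono order.trans)
qed

lemma fwd_n_to_A: assumes "4*q \<le> j" "j \<le> 6*q"
  shows "P (1 + (1 + 2*(n-1))) (n,False) (j,False) \<ge> (1-p) * ((1-p) * hop_lb)"
proof -
  have "P (1 + (1 + 2*(n-1))) (n,False) (j,False) \<ge> K (n,False) (n,True) * P (1 + 2*(n-1)) (n,True) (j,False)"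
    by (rule P_first_step_ge) (use assms n3 q_facts in \<open>auto simp: mem_states\<close>)
  then show ?thesis unfolding K_fwdn_turn using bwd_n_to_A[OF assms] p_range by (meson mult_left_mono order.trans)
qed

text \<open>A time r in the window [12q+4, 124q-4] at which x puts mass at least rho/n on each state of A;
  the window leaves room for the final A-to-A segment in the 153q steps of the minorisation.\<close>

definition block_time :: "nat \<Rightarrow> nat \<times> bool \<Rightarrow> bool" where
  "block_time r x \<longleftrightarrow> 12*q+4 \<le> r \<and> r \<le> 124*q - 4 \<and>
     (\<forall>j. 4*q \<le> j \<longrightarrow> j \<le> 6*q \<longrightarrow> P r x (j,False) \<ge> rho / real n)"

lemma reach_A: assumes x: "x \<in> S" shows "\<exists>r. block_time r x"
  using x n3
proof (cases rule: state_cases)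
  case (um i)
  show ?thesis
  proof (cases "i \<le> 32*q")
    case True
    show ?thesis
      by (rule exI[of _ "60*q + 18*q"])
        (use q_facts reach_A_fwd_left[OF um(2) True] rho_le_two_hops um in \<open>auto simp: block_time_def intro: order.trans\<close>)
  next
    case False
    have e: "(4*n - 2*i - 40*q) + 40*q = 4*n - 2*i" using um q_facts by linarith
    show ?thesis
      by (rule exI[of _ "4*n - 2*i"])
        (use q_facts reach_A_fwd_right[of i] rho_le_beta_hop um False e in \<open>auto simp: block_time_def intro: order.trans\<close>)
  qed
next
  case (dm i)
  show ?thesis
  proof (cases "12*q \<le> i")
    case True
    show ?thesis
      by (rule exI[of _ "2*i"])
        (use q_facts reach_A_bwd_right[of i] rho_le_hop dm True in \<open>auto simp: block_time_def intro: order.trans\<close>)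
  next
    case False
    show ?thesis
      by (rule exI[of _ "(2*i + 40*q - 4) + (40*q + 18*q)"])
        (use q_facts reach_A_bwd_left[of i] rho_le_beta_two_hops dm False in \<open>auto simp: block_time_def intro: order.trans\<close>)
  qed
next
  case u1
  show ?thesis
    by (rule exI[of _ "1 + (60*q + 18*q)"])
      (use q_facts fwd_1_to_A rho_le_step_two_hops u1 in \<open>auto simp: block_time_def intro: order.trans\<close>)
next
  case d1
  show ?thesis
    by (rule exI[of _ "1 + (1 + (60*q + 18*q))"])
      (use q_facts bwd_1_to_A rho_le_turn_two_hops d1 in \<open>auto simp: block_time_def intro: order.trans\<close>)
next
  case un
  show ?thesis
    by (rule exI[of _ "1 + (1 + 2*(n-1))"])
      (use q_facts fwd_n_to_A rho_le_turn_hop un in \<open>auto simp: block_time_def intro: order.trans\<close>)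
next
  case dn
  show ?thesis
    by (rule exI[of _ "1 + 2*(n-1)"])
      (use q_facts bwd_n_to_A rho_le_step_hop dn in \<open>auto simp: block_time_def intro: order.trans\<close>)
qed

definition nu_block :: "nat \<times> bool \<Rightarrow> real" where
  "nu_block y = (if snd y = False \<and> 4*q \<le> fst y \<and> fst y \<le> 6*q then 1 / real (2*q+1) else 0)"

definition delta_large :: real where "delta_large = rho * \<beta>^2 / 64000"

lemma nu_block_sum: "(\<Sum>y\<in>S. nu_block y) = 1"
proof -
  let ?A = "(\<lambda>j. (j,False)) ` {4*q..6*q}"
  have A: "?A \<subseteq> S" using q_facts by (auto simp: mem_states)
  have "(\<Sum>y\<in>S. nu_block y) = (\<Sum>y\<in>?A. nu_block y)"
    by (rule sum.mono_neutral_right) (use A finite_states in \<open>auto simp: nu_block_def\<close>)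
  also have "\<dots> = (\<Sum>j\<in>{4*q..6*q}. 1 / real (2*q+1))"
    by (subst sum.reindex) (auto simp: inj_on_def nu_block_def)
  also have "\<dots> = 1" by simp
  finally show ?thesis .
qed

lemma delta_large_le:
  assumes a: "a \<ge> real n / 40"
  shows "a * (rho / real n * (a * (hop_lb * hop_lb))) \<ge> delta_large * (1 / a)"
proof -
  define Y where "Y = rho * \<beta>^2"
  have np: "real n > 0" using n3 by simp
  have apos: "a > 0" using a np by linarith
  have Y0: "Y \<ge> 0" unfolding Y_def using rho_bounds by simp
  have l1: "a * (rho / real n * (a * (hop_lb * hop_lb))) = (a*a) * (Y / (real n * real n * real n))"
    unfolding hop_lb_def Y_def using np by (simp add: field_simps power2_eq_square)
  have aa: "a*a \<ge> (real n / 40) * (real n / 40)" using a np by (intro mult_mono) auto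
  have "Y / (1600 * real n) = (real n / 40) * (real n / 40) * (Y / (real n * real n * real n))"
    using np by (simp add: field_simps)
  also have "\<dots> \<le> (a*a) * (Y / (real n * real n * real n))"
    using aa Y0 np by (intro mult_right_mono) auto
  finally have L: "Y / (1600 * real n) \<le> a * (rho / real n * (a * (hop_lb * hop_lb)))" using l1 by simp
  have "delta_large * (1 / a) = (Y / 64000) / a" unfolding delta_large_def Y_def by simp
  also have "\<dots> \<le> (Y / 64000) / (real n / 40)" using a apos np Y0 by (intro divide_left_mono) auto
  also have "\<dots> = Y / (1600 * real n)" using np by (simp add: field_simps)
  finally show ?thesis using L by linarith
qed

text \<open>Every state reaches every state of A in exactly 153q steps: first to A at a block time r,
  then from A back to A in the remaining 153q - r steps.\<close>

lemma reach_A_153q: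
  assumes x: "x \<in> S" and j: "4*q \<le> j" "j \<le> 6*q"
  shows "P (153*q) x (j,False) \<ge> delta_large / real (2*q+1)"
proof -
  have np: "real n > 0" using n3 by simp
  obtain r where r: "12*q+4 \<le> r" "r \<le> 124*q - 4"
    and rb: "\<And>j. 4*q \<le> j \<Longrightarrow> j \<le> 6*q \<Longrightarrow> P r x (j,False) \<ge> rho / real n"
    using reach_A[OF x] unfolding block_time_def by blast
  have Te: "153*q = r + (153*q - r)" using r by simp
  have "P (r + (153*q - r)) x (j,False) \<ge> (\<Sum>h\<in>{4*q..6*q}. P r x (h,False) * P (153*q - r) (h,False) (j,False))"
    using j q_facts by (intro P_ge_sum_lane) (auto simp: mem_states)
  moreover have "(\<Sum>h\<in>{4*q..6*q}. P r x (h,False) * P (153*q - r) (h,False) (j,False))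
                 \<ge> real (6*q + 1 - 4*q) * (rho / real n * (real (2*q+1) * (hop_lb * hop_lb)))"
  proof (rule sum_prod_ge_uniform)
    show "\<And>h. h \<in> {4*q..6*q} \<Longrightarrow> P r x (h,False) \<ge> rho / real n" using rb by auto
    show "\<And>h. h \<in> {4*q..6*q} \<Longrightarrow> P (153*q - r) (h,False) (j,False) \<ge> real (2*q+1) * (hop_lb * hop_lb)"
      using j r by (intro A_to_A) auto
    show "rho / real n \<ge> 0" using rho_bounds np by simp
    show "real (2*q+1) * (hop_lb * hop_lb) \<ge> 0" using hop_lb_nonneg by simp
  qed
  moreover have "6*q + 1 - 4*q = 2*q+1" by simp
  moreover have "real (2*q+1) * (rho / real n * (real (2*q+1) * (hop_lb * hop_lb))) \<ge> delta_large * (1 / real (2*q+1))"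
    by (rule delta_large_le[OF block_size_ge])
  ultimately show ?thesis using Te by simp
qed

lemma doeblin_large: "doeblin (153*q) delta_large nu_block"
  unfolding doeblin_def
proof (intro conjI ballI)
  show "delta_large > 0" unfolding delta_large_def rho_def using beta_pos by simp
  show "\<And>y. y \<in> S \<Longrightarrow> nu_block y \<ge> 0" by (simp add: nu_block_def)
  show "(\<Sum>y\<in>S. nu_block y) = 1" by (rule nu_block_sum)
  fix x y assume x: "x \<in> S" and y: "y \<in> S"
  show "delta_large * nu_block y \<le> P (153*q) x y"
  proof (cases "snd y = False \<and> 4*q \<le> fst y \<and> fst y \<le> 6*q")
    case True
    then have "y = (fst y, False)" by (cases y) auto
    then show ?thesis using reach_A_153q[OF x, of "fst y"] True by (simp add: nu_block_def)
  next
    case False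
    then have "nu_block y = 0" unfolding nu_block_def by argo
    then show ?thesis using P_nonneg by simp
  qed
qed

end


context chain begin

lemma stat_dist_eq:
  assumes D: "doeblin T \<delta> \<nu>" and T: "T \<ge> 1"
  shows "stat_dist n U = pi_chain"
  unfolding stat_dist_def is_stationary_iff
proof (rule the_equality)
  show "stationary pi_chain" by (rule pi_chain_stationary)
  show "\<pi> = pi_chain" if "stationary \<pi>" for \<pi>
    using stationary_unique[OF D T that pi_chain_stationary] .
qed

lemma chain_mixing:
  assumes D: "doeblin T \<delta> \<nu>" and T: "T \<ge> 1" and TA: "real T \<le> A * real n"
    and d0: "0 < \<delta>0" "\<delta>0 \<le> \<delta>"
    and z: "\<forall>x\<in>S. z0 x \<ge> 0" and F: "F = (\<Sum>x\<in>S. z0 x)" and Fp: "F > 0"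
    and eps: "0 < eps" "eps \<le> 1/2"
    and t: "real t \<ge> (A * (2 / \<delta>0 + 1)) * real n * ln (real n / eps)"
    and x: "x \<in> S"
  shows "\<bar>evolve n U z0 t x - stat_dist n U x * F\<bar> \<le> eps / (2 * real n) * F"
proof -
  have "\<bar>evolve n U z0 t x - stat_dist n U x * F\<bar> \<le> 2 * F * (1 - \<delta>) ^ (t div T)"
    using doeblin_convergence[OF D pi_chain_stationary z F x, of t]
    by (simp add: evolve_eq[OF x] stat_dist_eq[OF D T])
  also have "\<dots> \<le> 2 * F * (eps / (4 * real n))"
    using contraction_time[OF T TA d0 doeblin_le_1[OF D] n3 eps t] Fp by (intro mult_left_mono) auto
  also have "\<dots> = eps / (2 * real n) * F" by (simp add: field_simps)
  finally show ?thesis .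
qed

end

text \<open>The minorisation constant, uniform over n \<ge> 3 and n/c \<le> U \<le> c n.\<close>

definition delta_min :: "real \<Rightarrow> real" where
  "delta_min c = min ((exp (-8*c) / (4*c))^5 / (90 * 64000)) ((1/3)^(2*5120+2))"

lemma (in large_chain) delta_large_eq: "delta_large = (exp (-8*c) / (4*c))^5 / (90 * 64000)"
  unfolding delta_large_def rho_def \<beta>_def by (simp add: power_add[symmetric] field_simps)

lemma (in chain) doeblin_uniform:
  assumes c: "c \<ge> 1" "real n / c \<le> real U" "real U \<le> c * real n"
  shows "\<exists>T \<delta> \<nu>. doeblin T \<delta> \<nu> \<and> T \<ge> 1 \<and> real T \<le> 4 * real n \<and> delta_min c \<le> \<delta>"
proof (cases "n \<ge> 5120")
  case True
  interpret large_chain n U c using c True by unfold_locales auto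
  have "153 * q \<ge> 1" "real (153*q) \<le> 4 * real n" using q_facts by linarith+
  moreover have "delta_min c \<le> delta_large" unfolding delta_large_eq delta_min_def by simp
  ultimately show ?thesis using doeblin_large by blast
next
  case False
  have "(1/3::real)^(2*5120+2) \<le> (1/3)^(2*n+2)" using False by (intro power_decreasing) auto
  then have "delta_min c \<le> (1/3)^(2*n+2)" unfolding delta_min_def by linarith
  moreover have "real (2*n+2) \<le> 4 * real n" using n3 by simp
  ultimately show ?thesis using doeblin_small by fastforce
qed

theorem lemma13:
  fixes c :: real
  assumes "c \<ge> 1"
  shows "\<exists>C>0. \<forall>(n::nat) (U::nat). n \<ge> 3 \<longrightarrow> U \<ge> 3 \<longrightarrow>
           real n / c \<le> real U \<longrightarrow> real U \<le> c * real n \<longrightarrow>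
           (\<forall>(z0 :: (nat \<times> bool) \<Rightarrow> real) (F::real).
              (\<forall>x\<in>states n. z0 x \<ge> 0) \<longrightarrow> F = (\<Sum>x\<in>states n. z0 x) \<longrightarrow> F > 0 \<longrightarrow>
              (\<forall>eps::real. 0 < eps \<longrightarrow> eps \<le> 1/2 \<longrightarrow>
                 (\<forall>t::nat. real t \<ge> C * real n * ln (real n / eps) \<longrightarrow>
                    (\<forall>x\<in>states n.
                       \<bar>evolve n U z0 t x - stat_dist n U x * F\<bar> \<le> eps / (2 * real n) * F))))"
proof -
  have d0: "delta_min c > 0" unfolding delta_min_def using assms by simp
  define C where "C = 4 * (2 / delta_min c + 1)"
  show ?thesis
  proof (rule exI[of _ C], intro conjI allI impI ballI)
    show "C > 0" unfolding C_def using d0 by (simp add: add_pos_pos)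
    fix n U :: nat and z0 :: "nat \<times> bool \<Rightarrow> real" and F eps :: real and t :: nat and x
    assume n3: "n \<ge> 3" and U3: "U \<ge> 3" and U: "real n / c \<le> real U" "real U \<le> c * real n"
      and z: "\<forall>x\<in>states n. z0 x \<ge> 0" and F: "F = (\<Sum>x\<in>states n. z0 x)" and Fp: "F > 0"
      and eps: "0 < eps" "eps \<le> 1/2" and t: "real t \<ge> C * real n * ln (real n / eps)"
      and x: "x \<in> states n"
    interpret chain n U using n3 U3 by unfold_locales
    obtain T \<delta> \<nu> where D: "doeblin T \<delta> \<nu>" "T \<ge> 1" "real T \<le> 4 * real n" "delta_min c \<le> \<delta>"
      using doeblin_uniform[OF assms U] by blast
    show "\<bar>evolve n U z0 t x - stat_dist n U x * F\<bar> \<le> eps / (2 * real n) * F"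
      by (rule chain_mixing[OF D(1-3) d0 D(4) z F Fp eps _ x]) (use t in \<open>simp add: C_def\<close>)
  qed
qed

end
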